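(* Let $A\in\mathbb{R}^{n\times n}$ and $C_i\in\mathbb{R}^{s_i\times n}$, $i\in\mathbf{m}=\{1,\dots,m\}$, $m>1$, and suppose the system $\dot x=Ax$, $y_i=C_ix$ is jointly observable. Let $\mathcal{P}$ be a finite index set and, for each $p\in\mathcal{P}$, let $\mathbb{N}(p)$ be a strongly connected directed graph on the vertex set $\mathbf{m}$ with a self-loop at each vertex, such that the matrix $S(p)$ is doubly stochastic. Let $\lambda>0$. Then there exist matrices $K_i\in\mathbb{R}^{n\times s_i}$, $i\in\mathbf{m}$, and a number $g_0>0$ such that for every $g\ge g_0$ there is a constant $c>0$ with the following property: for every switching signal $\sigma:[0,\infty)\to\mathcal{P}$ (no dwell-time restriction), every initial state $x(0)$ and all initial estimator states $x_i(0)$, the solutions of the system and of the distributed observer $$\dot{x}_i = (A+K_iC_i)x_i -K_iy_i -gP_i\Big(x_i-\frac{1}{m_i(\sigma(t))}\sum_{j\in\mathcal{N}_i(\sigma(t))} x_j\Big),\quad i\in\mathbf{m},$$ satisfy $\|e(t)\|\le c\,e^{-\lambda t}\|e(0)\|$ for all $t\ge0$, where $e=\mathrm{column}\{x_1-x,\dots,x_m-x\}$.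
   Context: Joint observability means the pair $(C,A)$ with $C=[C_1'\ \cdots\ C_m']'$ is observable, equivalently $\bigcap_{i}\mathcal{V}_i=0$, where $\mathcal{V}_i$ is the unobservable subspace of $(C_i,A)$ (the largest $A$-invariant subspace contained in $\ker C_i$). $P_i$ denotes the orthogonal projection onto $\mathcal{V}_i$. For $p\in\mathcal{P}$, $\mathcal{N}_i(p)$ is the set of $j$ such that there is an arc from $j$ to $i$ in $\mathbb{N}(p)$ (so $i\in\mathcal{N}_i(p)$), and $m_i(p)$ is the number of elements of $\mathcal{N}_i(p)$. $S(p)=D_{\mathbb{N}(p)}^{-1}A_{\mathbb{N}(p)}'$, where $A_{\mathbb{N}(p)}$ is the adjacency matrix of $\mathbb{N}(p)$ (entry $(j,i)$ equal to 1 iff there is an arc from $j$ to $i$) and $D_{\mathbb{N}(p)}$ is the diagonal matrix of in-degrees; thus $S(p)_{ij}=1/m_i(p)$ if $j\in\mathcal{N}_i(p)$ and $0$ otherwise. Doubly stochastic means all row sums and all column sums equal 1. A switching signal is a piecewise-constant, right-continuous map $\sigma:[0,\infty)\to\mathcal{P}$ with finitely many discontinuities on each bounded interval. $g>0$ is a scalar gain. *)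

theory Defs
  imports "HOL-Analysis.Analysis"
begin

text \<open>Agents are indexed by {0..<m} (the paper's {1..m}).
  The output matrix C_i (of size s_i x n) is given by its rows C i k, k < s i;
  the gain K_i (of size n x s_i) is given by its columns K i k, k < s i.\<close>

definition out_map :: "(nat \<Rightarrow> nat \<Rightarrow> real^'n) \<Rightarrow> (nat \<Rightarrow> nat) \<Rightarrow> nat \<Rightarrow> real^'n \<Rightarrow> (nat \<Rightarrow> real)" where
  "out_map C s i x = (\<lambda>k. if k < s i then C i k \<bullet> x else 0)"

definition gain_map :: "(nat \<Rightarrow> nat \<Rightarrow> real^'n) \<Rightarrow> (nat \<Rightarrow> nat) \<Rightarrow> nat \<Rightarrow> (nat \<Rightarrow> real) \<Rightarrow> real^'n" where
  "gain_map K s i y = (\<Sum>k<s i. y k *\<^sub>R K i k)"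

definition A_invariant :: "real^'n^'n \<Rightarrow> (real^'n) set \<Rightarrow> bool" where
  "A_invariant A V \<longleftrightarrow> (\<forall>x\<in>V. A *v x \<in> V)"

definition largest_inv_subspace :: "real^'n^'n \<Rightarrow> (real^'n) set \<Rightarrow> (real^'n) set" where
  "largest_inv_subspace A W = span (\<Union>{V. subspace V \<and> A_invariant A V \<and> V \<subseteq> W})"

definition unobs :: "real^'n^'n \<Rightarrow> (nat \<Rightarrow> nat \<Rightarrow> real^'n) \<Rightarrow> (nat \<Rightarrow> nat) \<Rightarrow> nat \<Rightarrow> (real^'n) set" where
  "unobs A C s i = largest_inv_subspace A {x. out_map C s i x = (\<lambda>_. 0)}"

text \<open>Joint observability: (C, A) observable with C the stacked matrix, i.e. the
  unobservable subspace of (C, A) (largest A-invariant subspace in ker C) is zero.\<close>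
definition jointly_observable :: "real^'n^'n \<Rightarrow> (nat \<Rightarrow> nat \<Rightarrow> real^'n) \<Rightarrow> (nat \<Rightarrow> nat) \<Rightarrow> nat \<Rightarrow> bool" where
  "jointly_observable A C s m \<longleftrightarrow>
     largest_inv_subspace A {x. \<forall>i<m. out_map C s i x = (\<lambda>_. 0)} = {0}"

definition orth_proj :: "(real^'n) set \<Rightarrow> real^'n \<Rightarrow> real^'n" where
  "orth_proj V x = (THE p. p \<in> V \<and> (\<forall>v\<in>V. (x - p) \<bullet> v = 0))"

text \<open>Graphs: E p j i means there is an arc from j to i in N(p).\<close>
definition nbrs :: "('p \<Rightarrow> nat \<Rightarrow> nat \<Rightarrow> bool) \<Rightarrow> nat \<Rightarrow> 'p \<Rightarrow> nat \<Rightarrow> nat set" where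
  "nbrs E m p i = {j. j < m \<and> E p j i}"

definition arcs :: "('p \<Rightarrow> nat \<Rightarrow> nat \<Rightarrow> bool) \<Rightarrow> nat \<Rightarrow> 'p \<Rightarrow> (nat \<times> nat) set" where
  "arcs E m p = {(j, i). j < m \<and> i < m \<and> E p j i}"

definition is_graph_on :: "('p \<Rightarrow> nat \<Rightarrow> nat \<Rightarrow> bool) \<Rightarrow> nat \<Rightarrow> 'p \<Rightarrow> bool" where
  "is_graph_on E m p \<longleftrightarrow> (\<forall>j i. E p j i \<longrightarrow> j < m \<and> i < m)"

definition strongly_connected :: "('p \<Rightarrow> nat \<Rightarrow> nat \<Rightarrow> bool) \<Rightarrow> nat \<Rightarrow> 'p \<Rightarrow> bool" where
  "strongly_connected E m p \<longleftrightarrow> (\<forall>i<m. \<forall>j<m. (i, j) \<in> (arcs E m p)\<^sup>*)"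

definition Smat :: "('p \<Rightarrow> nat \<Rightarrow> nat \<Rightarrow> bool) \<Rightarrow> nat \<Rightarrow> 'p \<Rightarrow> nat \<Rightarrow> nat \<Rightarrow> real" where
  "Smat E m p i j = (if j \<in> nbrs E m p i then 1 / real (card (nbrs E m p i)) else 0)"

definition doubly_stochastic :: "nat \<Rightarrow> (nat \<Rightarrow> nat \<Rightarrow> real) \<Rightarrow> bool" where
  "doubly_stochastic m S \<longleftrightarrow>
     (\<forall>i<m. \<forall>j<m. S i j \<ge> 0) \<and>
     (\<forall>i<m. (\<Sum>j<m. S i j) = 1) \<and> (\<forall>j<m. (\<Sum>i<m. S i j) = 1)"

text \<open>Switching signal on [0,oo) with values in P: piecewise constant, right-continuous,
  finitely many switches on every bounded interval.\<close>
definition switching_signal :: "'p set \<Rightarrow> (real \<Rightarrow> 'p) \<Rightarrow> bool" where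
  "switching_signal P \<sigma> \<longleftrightarrow>
     (\<forall>t\<ge>0. \<sigma> t \<in> P) \<and>
     (\<forall>T>0. \<exists>ts::real list. sorted_wrt (<) ts \<and> ts \<noteq> [] \<and> hd ts = 0 \<and> last ts = T \<and>
        (\<forall>k. Suc k < length ts \<longrightarrow> (\<forall>t\<in>{ts ! k ..< ts ! Suc k}. \<sigma> t = \<sigma> (ts ! k))))"

text \<open>Solution of \<dot>z(t) = f t (z t) on [0,oo): continuous, with right derivative
  equal to the right-hand side at every t \<ge> 0 (right-hand sides are right-continuous
  and piecewise continuous in t).\<close>
definition solves_ode :: "(real \<Rightarrow> 'a::real_normed_vector) \<Rightarrow> (real \<Rightarrow> 'a) \<Rightarrow> bool" where
  "solves_ode z dz \<longleftrightarrow> continuous_on {0..} z \<and>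
     (\<forall>t\<ge>0. (z has_vector_derivative dz t) (at t within {t..}))"

definition observer_rhs where
  "observer_rhs A C K s E m g \<sigma> x xs i t =
     A *v xs i t + gain_map K s i (out_map C s i (xs i t)) - gain_map K s i (out_map C s i (x t))
     - g *\<^sub>R orth_proj (unobs A C s i)
         (xs i t - (1 / real (card (nbrs E m (\<sigma> t) i))) *\<^sub>R (\<Sum>j\<in>nbrs E m (\<sigma> t) i. xs j t))"

definition err_norm :: "nat \<Rightarrow> (real \<Rightarrow> real^'n) \<Rightarrow> (nat \<Rightarrow> real \<Rightarrow> real^'n) \<Rightarrow> real \<Rightarrow> real" where
  "err_norm m x xs t = sqrt (\<Sum>i<m. (norm (xs i t - x t))\<^sup>2)"

end

theory Submission
  imports Defs
begin

text \<open>
  The error \<open>e\<^sub>i = x\<^sub>i - x\<close> of agent \<open>i\<close> splits into its component in the unobservable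
  subspace \<open>V\<^sub>i\<close> of \<open>(C\<^sub>i, A)\<close> and the orthogonal remainder.  On \<open>V\<^sub>i\<^sup>\<bottom>\<close> the quotient system is
  observable, so an output injection \<open>K\<^sub>i\<close> together with a quadratic Lyapunov form \<open>B\<^sub>i\<close> of
  any prescribed decay rate exists; it is built by induction on the dimension, reducing to the
  kernel of the output and lifting back through a cascade change of coordinates.

  The \<open>V\<^sub>i\<close>-components are driven by the consensus term alone.  Since every graph is
  strongly connected with doubly stochastic \<open>S(p)\<close>, and the \<open>V\<^sub>i\<close> intersect trivially by joint
  observability, the consensus quadratic form is bounded below on \<open>V\<^sub>1 \<times> \<dots> \<times> V\<^sub>m\<close>
  uniformly in \<open>p\<close>.  For large \<open>g\<close> the function \<open>\<Sum>\<^sub>i |P\<^sub>i e\<^sub>i|\<^sup>2 + \<rho> B\<^sub>i(e\<^sub>i - P\<^sub>i e\<^sub>i)\<close> then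
  decreases at rate \<open>2\<lambda>\<close> for every mode \<open>p\<close> at once, hence along every switching signal.
\<close>

section \<open>Orthogonal projections\<close>

lemma orth_proj_characterization:
  fixes V :: "(real^'n) set"
  assumes "subspace V"
  shows "orth_proj V x \<in> V \<and> (\<forall>v\<in>V. (x - orth_proj V x) \<bullet> v = 0)"
proof -
  obtain y z where y: "y \<in> span V" and z: "\<And>w. w \<in> span V \<Longrightarrow> orthogonal z w" and xyz: "x = y + z"
    using orthogonal_subspace_decomp_exists[of V x] by blast
  have span_V: "span V = V" using assms by (simp add: span_eq_iff)
  have y_proj: "y \<in> V \<and> (\<forall>v\<in>V. (x - y) \<bullet> v = 0)"
  proof -
    have "(x - y) \<bullet> v = 0" if "v \<in> V" for v
      using z[of v] that span_V xyz by (simp add: orthogonal_def)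
    then show ?thesis using y span_V by simp
  qed
  have unique: "p = y" if "p \<in> V \<and> (\<forall>v\<in>V. (x - p) \<bullet> v = 0)" for p
  proof -
    have "y - p \<in> V" using that y_proj assms by (simp add: subspace_diff)
    then have "(x - p) \<bullet> (y - p) = 0" "(x - y) \<bullet> (y - p) = 0" using that y_proj by auto
    then have "(y - p) \<bullet> (y - p) = 0" by (simp add: inner_diff_left inner_diff_right algebra_simps)
    then show ?thesis by simp
  qed
  have "orth_proj V x = y"
    unfolding orth_proj_def by (rule the_equality) (use y_proj unique in blast)+
  then show ?thesis using y_proj by simp
qed

lemma orth_proj_in: "subspace V \<Longrightarrow> orth_proj V x \<in> V"
  using orth_proj_characterization by blast

lemma orth_proj_orthogonal: "subspace V \<Longrightarrow> v \<in> V \<Longrightarrow> (x - orth_proj V x) \<bullet> v = 0"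
  using orth_proj_characterization by blast

lemma orth_proj_unique:
  assumes "subspace V" "p \<in> V" "\<And>v. v \<in> V \<Longrightarrow> (x - p) \<bullet> v = 0"
  shows "orth_proj V x = p"
proof -
  let ?q = "orth_proj V x"
  have "p - ?q \<in> V" using assms orth_proj_in subspace_diff by blast
  then have "(x - p) \<bullet> (p - ?q) = 0" "(x - ?q) \<bullet> (p - ?q) = 0" using assms orth_proj_orthogonal by auto
  then have "(p - ?q) \<bullet> (p - ?q) = 0" by (simp add: inner_diff_left inner_diff_right algebra_simps)
  then show ?thesis by simp
qed

lemma orth_proj_eq_self: "subspace V \<Longrightarrow> x \<in> V \<Longrightarrow> orth_proj V x = x"
  by (rule orth_proj_unique) auto

lemma orth_proj_eq_0: "subspace V \<Longrightarrow> (\<And>v. v \<in> V \<Longrightarrow> x \<bullet> v = 0) \<Longrightarrow> orth_proj V x = 0"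
  by (rule orth_proj_unique) (auto simp: subspace_0)

lemma linear_orth_proj:
  assumes V: "subspace V"
  shows "linear (orth_proj V)"
proof (rule linearI)
  fix x y and c :: real
  show "orth_proj V (x + y) = orth_proj V x + orth_proj V y"
  proof (rule orth_proj_unique[OF V])
    show "orth_proj V x + orth_proj V y \<in> V" using V orth_proj_in subspace_add by blast
    fix v assume "v \<in> V"
    then have "(x - orth_proj V x) \<bullet> v = 0" "(y - orth_proj V y) \<bullet> v = 0"
      using orth_proj_orthogonal V by blast+
    then show "(x + y - (orth_proj V x + orth_proj V y)) \<bullet> v = 0"
      by (simp add: inner_diff_left inner_add_left)
  qed
  show "orth_proj V (c *\<^sub>R x) = c *\<^sub>R orth_proj V x"
  proof (rule orth_proj_unique[OF V])
    show "c *\<^sub>R orth_proj V x \<in> V" using V orth_proj_in subspace_mul by blast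
    fix v assume "v \<in> V"
    then have "(x - orth_proj V x) \<bullet> v = 0" using orth_proj_orthogonal V by blast
    then show "(c *\<^sub>R x - c *\<^sub>R orth_proj V x) \<bullet> v = 0"
      by (simp flip: scaleR_right_diff_distrib)
  qed
qed

lemma inner_orth_proj_right: "subspace V \<Longrightarrow> v \<in> V \<Longrightarrow> v \<bullet> orth_proj V x = v \<bullet> x"
  using orth_proj_orthogonal[of V v x] by (simp add: inner_diff_left inner_diff_right inner_commute)

lemma norm_orth_proj_pythagoras:
  assumes "subspace V"
  shows "(norm x)\<^sup>2 = (norm (orth_proj V x))\<^sup>2 + (norm (x - orth_proj V x))\<^sup>2"
proof -
  have "(x - orth_proj V x) \<bullet> orth_proj V x = 0"
    using assms by (simp add: orth_proj_orthogonal orth_proj_in)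
  then show ?thesis
    by (simp add: power2_norm_eq_inner inner_diff_left inner_diff_right inner_commute algebra_simps)
qed

lemma norm_orth_proj_le_dist:
  assumes V: "subspace V" and v: "v \<in> V"
  shows "norm (x - orth_proj V x) \<le> norm (x - v)"
proof (rule power2_le_imp_le)
  have "orth_proj V x - v \<in> V" using V orth_proj_in[OF V] v by (rule subspace_diff)
  then have "orthogonal (x - orth_proj V x) (orth_proj V x - v)"
    unfolding orthogonal_def by (rule orth_proj_orthogonal[OF V])
  from norm_add_Pythagorean[OF this]
  show "(norm (x - orth_proj V x))\<^sup>2 \<le> (norm (x - v))\<^sup>2" by simp
qed simp

definition orth_compl_in :: "(real^'n) set \<Rightarrow> (real^'n) set \<Rightarrow> (real^'n) set" where
  "orth_compl_in X N = {x\<in>X. \<forall>v\<in>N. x \<bullet> v = 0}"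

lemma subspace_orth_compl_in: "subspace X \<Longrightarrow> subspace (orth_compl_in X N)"
  unfolding orth_compl_in_def subspace_def by (auto simp: inner_add_left)

lemma orth_proj_orth_compl_in_add:
  assumes "subspace X" "subspace N" "N \<subseteq> X" "x \<in> X"
  shows "orth_proj (orth_compl_in X N) x + orth_proj N x = x"
proof -
  have "orth_proj (orth_compl_in X N) x = x - orth_proj N x"
  proof (rule orth_proj_unique[OF subspace_orth_compl_in[OF assms(1)]])
    show "x - orth_proj N x \<in> orth_compl_in X N"
      using assms orth_proj_in[OF assms(2)] orth_proj_orthogonal[OF assms(2)] subspace_diff[OF assms(1)]
      unfolding orth_compl_in_def by blast
    show "(x - (x - orth_proj N x)) \<bullet> v = 0" if "v \<in> orth_compl_in X N" for v
    proof -
      have "v \<bullet> orth_proj N x = 0"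
        using that orth_proj_in[OF assms(2), of x] unfolding orth_compl_in_def by blast
      then show ?thesis by (simp add: inner_commute)
    qed
  qed
  then show ?thesis by simp
qed

lemma orth_proj_orth_compl_in_mem: "subspace X \<Longrightarrow> orth_proj (orth_compl_in X N) y \<in> X"
  using orth_proj_in[OF subspace_orth_compl_in] unfolding orth_compl_in_def by blast

lemma orth_proj_orth_compl_in_eq_0: "subspace X \<Longrightarrow> v \<in> N \<Longrightarrow> orth_proj (orth_compl_in X N) v = 0"
  by (rule orth_proj_eq_0[OF subspace_orth_compl_in]) (auto simp: orth_compl_in_def inner_commute)

lemma orth_proj_eq_0_on_orth_compl_in: "subspace N \<Longrightarrow> y \<in> orth_compl_in X N \<Longrightarrow> orth_proj N y = 0"
  by (rule orth_proj_eq_0) (auto simp: orth_compl_in_def)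

section \<open>Unobservable subspaces and outputs\<close>

lemma subspace_largest_inv_subspace: "subspace (largest_inv_subspace A W)"
  unfolding largest_inv_subspace_def by (rule subspace_span)

lemma largest_inv_subspace_subset: "subspace W \<Longrightarrow> largest_inv_subspace A W \<subseteq> W"
  unfolding largest_inv_subspace_def by (rule span_minimal) auto

lemma largest_inv_subspace_maximal:
  "subspace V \<Longrightarrow> A_invariant A V \<Longrightarrow> V \<subseteq> W \<Longrightarrow> V \<subseteq> largest_inv_subspace A W"
  unfolding largest_inv_subspace_def by (rule order_trans[OF _ span_superset]) blast

lemma A_invariant_largest_inv_subspace: "A_invariant A (largest_inv_subspace A W)"
proof -
  let ?S = "\<Union>{V. subspace V \<and> A_invariant A V \<and> V \<subseteq> W}"
  have "span ?S \<subseteq> {x. A *v x \<in> span ?S}"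
  proof (rule span_minimal)
    show "?S \<subseteq> {x. A *v x \<in> span ?S}"
      unfolding A_invariant_def by (auto intro: span_base)
    show "subspace {x. A *v x \<in> span ?S}"
      using matrix_vector_mul_linear subspace_span by (rule linear_subspace_linear_preimage)
  qed
  then show ?thesis unfolding A_invariant_def largest_inv_subspace_def by blast
qed

lemma out_map_eq_0_iff: "out_map C s i x = (\<lambda>_. 0) \<longleftrightarrow> (\<forall>k<s i. C i k \<bullet> x = 0)"
  unfolding out_map_def fun_eq_iff by auto

lemma subspace_out_map_kernel: "subspace {x. \<forall>i\<in>I. out_map C s i x = (\<lambda>_. 0)}"
  unfolding out_map_eq_0_iff subspace_def by (auto simp: inner_add_right)

text \<open>The map \<open>C\<^sub>i\<^sup>T C\<^sub>i\<close>: it has the kernel of \<open>C\<^sub>i\<close> and lets a gain acting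
  on outputs be written as a linear map of the state.\<close>
definition out_gram :: "(nat \<Rightarrow> nat \<Rightarrow> real^'n) \<Rightarrow> (nat \<Rightarrow> nat) \<Rightarrow> nat \<Rightarrow> real^'n \<Rightarrow> real^'n" where
  "out_gram C s i x = (\<Sum>k<s i. (C i k \<bullet> x) *\<^sub>R C i k)"

lemma linear_out_gram: "linear (out_gram C s i)"
  unfolding out_gram_def
  by (intro linearI) (simp_all add: inner_add_right scaleR_add_left sum.distrib scaleR_sum_right)

lemma out_gram_eq_0_iff: "out_gram C s i x = 0 \<longleftrightarrow> out_map C s i x = (\<lambda>_. 0)"
proof
  assume "out_gram C s i x = 0"
  moreover have "x \<bullet> out_gram C s i x = (\<Sum>k<s i. (C i k \<bullet> x)\<^sup>2)"
    unfolding out_gram_def by (simp add: inner_sum_right power2_eq_square inner_commute)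
  ultimately have "(\<Sum>k<s i. (C i k \<bullet> x)\<^sup>2) = 0" by simp
  then show "out_map C s i x = (\<lambda>_. 0)" by (simp add: sum_nonneg_eq_0_iff out_map_eq_0_iff)
qed (simp add: out_gram_def out_map_eq_0_iff)

lemma gain_map_out_map:
  assumes "linear (F i)"
  shows "gain_map (\<lambda>i k. F i (C i k)) s i (out_map C s i x) = F i (out_gram C s i x)"
  unfolding gain_map_def out_map_def out_gram_def using assms by (simp add: linear_sum linear_scale)

lemma subspace_unobs: "subspace (unobs A C s i)"
  unfolding unobs_def by (rule subspace_largest_inv_subspace)

lemma unobs_out_map: "x \<in> unobs A C s i \<Longrightarrow> out_map C s i x = (\<lambda>_. 0)"
  using largest_inv_subspace_subset[OF subspace_out_map_kernel[of "{i}"]]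
  unfolding unobs_def by auto

lemma unobs_invariant: "x \<in> unobs A C s i \<Longrightarrow> A *v x \<in> unobs A C s i"
  using A_invariant_largest_inv_subspace unfolding unobs_def A_invariant_def by blast

lemma jointly_observable_unobs_inter:
  assumes "jointly_observable A C s m" "\<forall>i<m. z \<in> unobs A C s i"
  shows "z = 0"
proof -
  define I where "I = (\<Inter>i<m. unobs A C s i)"
  have "subspace I" unfolding I_def by (rule subspace_Int) (rule subspace_unobs)
  moreover have "A_invariant A I" unfolding A_invariant_def I_def using unobs_invariant by blast
  moreover have "I \<subseteq> {x. \<forall>i<m. out_map C s i x = (\<lambda>_. 0)}" unfolding I_def using unobs_out_map by blast
  ultimately have "I \<subseteq> {0}"
    using largest_inv_subspace_maximal assms(1) unfolding jointly_observable_def by blast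
  then show ?thesis using assms(2) unfolding I_def by blast
qed

definition observable_on :: "(real^'n) set \<Rightarrow> (real^'n \<Rightarrow> real^'n) \<Rightarrow> (real^'n \<Rightarrow> real^'n) \<Rightarrow> bool" where
  "observable_on X A C \<longleftrightarrow>
     (\<forall>U. subspace U \<and> U \<subseteq> X \<and> (\<forall>u\<in>U. C u = 0) \<and> (\<forall>u\<in>U. A u \<in> U) \<longrightarrow> U \<subseteq> {0})"

text \<open>Observability of the quotient of \<open>(C\<^sub>i, A)\<close> by its unobservable subspace,
  realized on the orthogonal complement.\<close>
lemma observable_on_orth_unobs:
  fixes A :: "real^'n^'n" and C :: "nat \<Rightarrow> nat \<Rightarrow> real^'n" and s :: "nat \<Rightarrow> nat" and i :: nat
  defines "V \<equiv> unobs A C s i"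
  shows "observable_on {x. \<forall>v\<in>V. x \<bullet> v = 0} (\<lambda>x. A *v x - orth_proj V (A *v x)) (out_gram C s i)"
  unfolding observable_on_def
proof (intro allI impI)
  fix U assume U: "subspace U \<and> U \<subseteq> {x. \<forall>v\<in>V. x \<bullet> v = 0} \<and> (\<forall>u\<in>U. out_gram C s i u = 0)
    \<and> (\<forall>u\<in>U. A *v u - orth_proj V (A *v u) \<in> U)"
  have sV: "subspace V" unfolding V_def by (rule subspace_unobs)
  define W where "W = {u + v |u v. u \<in> U \<and> v \<in> V}"
  have "subspace W" unfolding W_def using U sV by (intro subspace_sums) auto
  moreover have "A_invariant A W" unfolding A_invariant_def
  proof
    fix y assume "y \<in> W"
    then obtain u v where uv: "y = u + v" "u \<in> U" "v \<in> V" unfolding W_def by blast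
    have "A *v y = (A *v u - orth_proj V (A *v u)) + (orth_proj V (A *v u) + A *v v)"
      unfolding uv by (simp add: matrix_vector_right_distrib)
    moreover have "orth_proj V (A *v u) + A *v v \<in> V"
      using sV orth_proj_in unobs_invariant uv(3) unfolding V_def by (blast intro: subspace_add)
    ultimately show "A *v y \<in> W" using U uv unfolding W_def by blast
  qed
  moreover have "W \<subseteq> {x. out_map C s i x = (\<lambda>_. 0)}"
  proof
    fix y assume "y \<in> W"
    then obtain u v where uv: "y = u + v" "u \<in> U" "v \<in> V" unfolding W_def by blast
    then have "\<forall>k<s i. C i k \<bullet> u = 0" "\<forall>k<s i. C i k \<bullet> v = 0"
      using U unobs_out_map[of v A C s i] out_gram_eq_0_iff[of C s i u]
      unfolding V_def out_map_eq_0_iff by blast+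
    then show "y \<in> {x. out_map C s i x = (\<lambda>_. 0)}" unfolding out_map_eq_0_iff uv by (simp add: inner_add_right)
  qed
  ultimately have WV: "W \<subseteq> V"
    unfolding V_def unobs_def by (rule largest_inv_subspace_maximal)
  show "U \<subseteq> {0}"
  proof
    fix u assume u: "u \<in> U"
    then have "u \<in> W" unfolding W_def using sV subspace_0 by force
    then have "u \<bullet> u = 0" using WV U u by blast
    then show "u \<in> {0}" by simp
  qed
qed

section \<open>Stabilization by output injection\<close>

lemma linear_factor_through:
  fixes C L :: "real^'n \<Rightarrow> real^'n"
  assumes S: "subspace S" and C: "linear C" and L: "linear L" and ker: "\<And>x. x \<in> S \<Longrightarrow> C x = 0 \<Longrightarrow> L x = 0"
  obtains G where "linear G" "\<And>x. x \<in> S \<Longrightarrow> L x = G (C x)"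
proof -
  obtain B where B: "B \<subseteq> C ` S" "independent B" "C ` S \<subseteq> span B"
    by (rule basis_exists[of "C ` S"]) blast
  obtain h where h: "\<And>b. b \<in> B \<Longrightarrow> h b \<in> S \<and> C (h b) = b"
    using bchoice[of B "\<lambda>b x. x \<in> S \<and> C x = b"] B(1) by blast
  obtain g where g: "linear g" "\<And>b. b \<in> B \<Longrightarrow> g b = h b"
    using linear_independent_extend[OF B(2)] by blast
  have Cg: "C (g y) = y" if "y \<in> span B" for y
    using linear_eq_on[OF linear_compose[OF g(1) C] linear_id that] by (simp add: g h)
  have gS: "span B \<subseteq> {y. g y \<in> S}"
    by (rule span_minimal) (use g h linear_subspace_linear_preimage[OF g(1) S] in auto)
  show ?thesis
  proof
    show "linear (L \<circ> g)" using linear_compose[OF g(1) L] .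
    fix x assume x: "x \<in> S"
    then have y: "C x \<in> span B" using B(3) by blast
    have "C (x - g (C x)) = 0" using Cg[OF y] C by (simp add: linear_diff)
    moreover have "x - g (C x) \<in> S" using gS y x S subspace_diff by blast
    ultimately have "L (x - g (C x)) = 0" by (rule ker[rotated])
    then show "L x = (L \<circ> g) (C x)" using L by (simp add: linear_diff)
  qed
qed

definition quadratic_lyapunov ::
    "(real^'n) set \<Rightarrow> (real^'n \<Rightarrow> real^'n) \<Rightarrow> real \<Rightarrow> (real^'n \<Rightarrow> real^'n \<Rightarrow> real) \<Rightarrow> real \<Rightarrow> bool" where
  "quadratic_lyapunov X M \<mu> B \<alpha> \<longleftrightarrow> bilinear B \<and> (\<forall>x y. B x y = B y x) \<and> \<alpha> > 0 \<and>
     (\<forall>x\<in>X. \<alpha> * (norm x)\<^sup>2 \<le> B x x) \<and> (\<forall>x\<in>X. B x (M x) \<le> - \<mu> * B x x)"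

lemma bilinear_pullback_plus_inner:
  fixes B :: "'b::real_vector \<Rightarrow> 'b \<Rightarrow> real" and z :: "'a::real_vector \<Rightarrow> 'b"
    and p :: "'a \<Rightarrow> 'c::real_inner"
  assumes "bilinear B" "linear z" "linear p"
  shows "bilinear (\<lambda>x y. \<rho> * B (z x) (z y) + p x \<bullet> p y)"
  unfolding bilinear_def
proof (intro conjI allI linearI)
  fix x y w :: 'a and c :: real
  show "\<rho> * B (z x) (z (y + w)) + p x \<bullet> p (y + w)
      = \<rho> * B (z x) (z y) + p x \<bullet> p y + (\<rho> * B (z x) (z w) + p x \<bullet> p w)"
    using assms by (simp add: linear_add bilinear_radd inner_add_right algebra_simps)
  show "\<rho> * B (z x) (z (c *\<^sub>R y)) + p x \<bullet> p (c *\<^sub>R y) = c *\<^sub>R (\<rho> * B (z x) (z y) + p x \<bullet> p y)"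
    using assms by (simp add: linear_scale bilinear_rmul algebra_simps)
  show "\<rho> * B (z (y + w)) (z x) + p (y + w) \<bullet> p x
      = \<rho> * B (z y) (z x) + p y \<bullet> p x + (\<rho> * B (z w) (z x) + p w \<bullet> p x)"
    using assms by (simp add: linear_add bilinear_ladd inner_add_left algebra_simps)
  show "\<rho> * B (z (c *\<^sub>R y)) (z x) + p (c *\<^sub>R y) \<bullet> p x = c *\<^sub>R (\<rho> * B (z y) (z x) + p y \<bullet> p x)"
    using assms by (simp add: linear_scale bilinear_lmul algebra_simps)
qed

lemma bilinear_inner_real: "bilinear ((\<bullet>) :: real^'n \<Rightarrow> _)"
  using bounded_bilinear_inner by (simp add: bilinear_conv_bounded_bilinear)

text \<open>The reduced system on \<open>N = X \<inter> ker C\<close> observes how far \<open>A\<close> pushes the state out of \<open>N\<close>.\<close>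
lemma observable_on_kernel:
  assumes X: "subspace X" and AX: "\<forall>x\<in>X. A x \<in> X" and obs: "observable_on X A C"
    and N: "subspace N" and N_def: "N = {x\<in>X. C x = 0}"
  shows "observable_on N (\<lambda>x. orth_proj N (A x)) (\<lambda>x. orth_proj (orth_compl_in X N) (A x))"
  unfolding observable_on_def
proof (intro allI impI)
  fix U assume U: "subspace U \<and> U \<subseteq> N \<and> (\<forall>u\<in>U. orth_proj (orth_compl_in X N) (A u) = 0)
    \<and> (\<forall>u\<in>U. orth_proj N (A u) \<in> U)"
  have NX: "N \<subseteq> X" and C0: "\<forall>u\<in>N. C u = 0" using N_def by auto
  have "A u \<in> U" if u: "u \<in> U" for u
  proof -
    have "A u \<in> X" using AX U NX u by blast
    have "orth_proj N (A u) = orth_proj (orth_compl_in X N) (A u) + orth_proj N (A u)"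
      using U u by simp
    also have "\<dots> = A u" using orth_proj_orth_compl_in_add[OF X N NX \<open>A u \<in> X\<close>] .
    finally have "orth_proj N (A u) = A u" .
    moreover have "orth_proj N (A u) \<in> U" using U u by blast
    ultimately show ?thesis by simp
  qed
  moreover have "U \<subseteq> X" "\<forall>u\<in>U. C u = 0" using U NX C0 by blast+
  ultimately show "U \<subseteq> {0}"
    using obs[unfolded observable_on_def, rule_format, of U] U by blast
qed

text \<open>The output \<open>C x\<close> determines the component \<open>a\<close> of \<open>x = a + b\<close> in \<open>R = X \<ominus> N\<close>
  (where \<open>b \<in> N = X \<inter> ker C\<close>), so an output injection can add any linear function of \<open>a\<close>
  to the dynamics.  It is chosen so that in the coordinates \<open>(a, z)\<close>, \<open>z = b + G' a\<close>, the
  system becomes the cascade \<open>a' = P\<^sub>R A z - \<gamma> a\<close>, \<open>z' = (P\<^sub>N A + G' P\<^sub>R A) z\<close>.\<close>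
lemma cascade_output_injection:
  fixes A C G' :: "real^'n \<Rightarrow> real^'n"
  assumes X: "subspace X" and linA: "linear A" and AX: "\<forall>x\<in>X. A x \<in> X" and linC: "linear C"
    and N: "subspace N" and N_def: "N = {x\<in>X. C x = 0}"
    and linG': "linear G'" and G'N: "\<And>y. G' y \<in> N"
  defines "R \<equiv> orth_compl_in X N"
  defines "z \<equiv> \<lambda>x. orth_proj N x + G' (orth_proj R x)"
  obtains G where "linear G" "\<And>y. G y \<in> X"
    "\<And>x. x \<in> X \<Longrightarrow> orth_proj R (A x + G (C x)) = orth_proj R (A (z x)) - \<gamma> *\<^sub>R orth_proj R x"
    "\<And>x. x \<in> X \<Longrightarrow> z (A x + G (C x)) = orth_proj N (A (z x)) + G' (orth_proj R (A (z x)))"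
proof -
  let ?PN = "orth_proj N" and ?PR = "orth_proj R"
  have NX: "N \<subseteq> X" using N_def by auto
  have R: "subspace R" unfolding R_def using X by (rule subspace_orth_compl_in)
  have linPN: "linear ?PN" and linPR: "linear ?PR" using N R by (auto intro: linear_orth_proj)
  have PR_in: "?PR y \<in> X" for y unfolding R_def using X by (rule orth_proj_orth_compl_in_mem)
  have PR_N: "?PR v = 0" if "v \<in> N" for v unfolding R_def using X that by (rule orth_proj_orth_compl_in_eq_0)
  have PN_R: "?PN v = 0" if "v \<in> R" for v using N that unfolding R_def by (rule orth_proj_eq_0_on_orth_compl_in)
  have split: "?PR x + ?PN x = x" if "x \<in> X" for x
    unfolding R_def using X N NX that by (rule orth_proj_orth_compl_in_add)
  define Fr where "Fr a = ?PR (A (G' a)) - ?PR (A a) - \<gamma> *\<^sub>R a" for a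
  define Fn where "Fn a = ?PN (A (G' a)) + \<gamma> *\<^sub>R G' a - ?PN (A a)" for a
  have Fr_R: "Fr (?PR x) \<in> R" for x
    unfolding Fr_def using R orth_proj_in by (intro subspace_diff subspace_mul) auto
  have Fn_N: "Fn a \<in> N" for a
    unfolding Fn_def using N orth_proj_in G'N by (intro subspace_diff subspace_add subspace_mul) auto
  define L where "L x = Fr (?PR x) + Fn (?PR x)" for x
  have linL: "linear L"
    unfolding L_def Fr_def Fn_def using linPR linPN linA linG'
    by (intro linearI) (simp_all add: linear_add linear_scale linear_diff algebra_simps scaleR_add_right)
  have "L x = 0" if "x \<in> X" "C x = 0" for x
  proof -
    have "?PR x = 0" using PR_N that N_def by blast
    then show ?thesis unfolding L_def Fr_def Fn_def using linA linG' linear_0 by (simp add: linear_0)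
  qed
  then obtain G0 where linG0: "linear G0" and G0: "\<And>x. x \<in> X \<Longrightarrow> L x = G0 (C x)"
    using linear_factor_through[OF X linC linL] by blast
  define G where "G y = orth_proj X (G0 y)" for y
  show ?thesis
  proof
    show "linear G" unfolding G_def using linear_compose[OF linG0 linear_orth_proj[OF X]] by (simp add: o_def)
    show "G y \<in> X" for y unfolding G_def using X by (rule orth_proj_in)
    fix x assume x: "x \<in> X"
    define a where "a = ?PR x"
    define b where "b = ?PN x"
    have b: "b \<in> N" unfolding b_def using N by (rule orth_proj_in)
    have zx: "z x = b + G' a" unfolding z_def a_def b_def ..
    have "L x \<in> X" unfolding L_def using Fr_R Fn_N NX X R_def subspace_add
      unfolding orth_compl_in_def by blast
    then have GC: "G (C x) = Fr a + Fn a"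
      unfolding G_def G0[OF x, symmetric] L_def a_def by (rule orth_proj_eq_self[OF X])
    have Ax: "A x = A a + A b" using split[OF x] linA unfolding a_def b_def by (metis linear_add)
    have PR_Fr: "?PR (Fr a) = Fr a" unfolding a_def using R Fr_R by (rule orth_proj_eq_self)
    have PN_Fr: "?PN (Fr a) = 0" unfolding a_def by (rule PN_R[OF Fr_R])
    have PN_Fn: "?PN (Fn a) = Fn a" using N Fn_N by (rule orth_proj_eq_self)
    have PR_Fn: "?PR (Fn a) = 0" using PR_N Fn_N by blast
    have PR_A: "?PR (A (z x)) = ?PR (A b) + ?PR (A (G' a))"
      and PN_A: "?PN (A (z x)) = ?PN (A b) + ?PN (A (G' a))"
      unfolding zx using linA linPR linPN by (simp_all add: linear_add)
    show R_dyn: "?PR (A x + G (C x)) = ?PR (A (z x)) - \<gamma> *\<^sub>R ?PR x"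
      unfolding Ax GC PR_A using linPR PR_Fr PR_Fn
      by (simp add: linear_add Fr_def a_def)
    have N_dyn: "?PN (A x + G (C x)) = ?PN (A (z x)) + \<gamma> *\<^sub>R G' a"
      unfolding Ax GC PN_A using linPN PN_Fr PN_Fn
      by (simp add: linear_add Fn_def)
    show "z (A x + G (C x)) = ?PN (A (z x)) + G' (?PR (A (z x)))"
      using linG' unfolding z_def N_dyn R_dyn by (simp add: linear_diff linear_scale a_def)
  qed
qed

lemma mult_le_weighted_squares: "(a::real) * b \<le> a\<^sup>2 / (2 * k) + k * b\<^sup>2 / 2" if "k > 0"
proof -
  have "2 * a * (k * b) \<le> a\<^sup>2 + (k * b)\<^sup>2" by (rule sum_squares_bound)
  then show ?thesis using that by (simp add: field_simps power2_eq_square)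
qed

lemma cascade_lyapunov:
  fixes M Mz G' K :: "real^'n \<Rightarrow> real^'n"
  assumes X: "subspace X" and N: "subspace N" and NX: "N \<subseteq> X"
    and linG': "linear G'" and G'N: "\<And>y. G' y \<in> N" and linK: "linear K"
    and lyapN: "quadratic_lyapunov N Mz (\<mu> + 1) B' \<alpha>'"
  defines "R \<equiv> orth_compl_in X N"
  defines "z \<equiv> \<lambda>x. orth_proj N x + G' (orth_proj R x)"
  assumes R_dyn: "\<And>x. x \<in> X \<Longrightarrow> orth_proj R (M x) = K (z x) - (\<mu> + 1) *\<^sub>R orth_proj R x"
    and z_dyn: "\<And>x. x \<in> X \<Longrightarrow> z (M x) = Mz (z x)"
  obtains B \<alpha> where "quadratic_lyapunov X M \<mu> B \<alpha>"
proof -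
  let ?PN = "orth_proj N" and ?PR = "orth_proj R"
  have R: "subspace R" unfolding R_def using X by (rule subspace_orth_compl_in)
  have linPN: "linear ?PN" and linPR: "linear ?PR" using N R by (auto intro: linear_orth_proj)
  have linz: "linear z" unfolding z_def using linPN linPR linG'
    by (intro linearI) (simp_all add: linear_add linear_scale scaleR_add_right)
  have zN: "z x \<in> N" for x unfolding z_def using N orth_proj_in G'N subspace_add by blast
  have split: "?PR x + ?PN x = x" if "x \<in> X" for x
    unfolding R_def using X N NX that by (rule orth_proj_orth_compl_in_add)
  have bilB': "bilinear B'" and symB': "\<And>x y. B' x y = B' y x" and \<alpha>': "\<alpha>' > 0"
    and B'_ge: "\<And>w. w \<in> N \<Longrightarrow> \<alpha>' * (norm w)\<^sup>2 \<le> B' w w"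
    and B'_dec: "\<And>w. w \<in> N \<Longrightarrow> B' w (Mz w) \<le> - (\<mu> + 1) * B' w w"
    using lyapN unfolding quadratic_lyapunov_def by auto
  have B'_nonneg: "0 \<le> B' (z x) (z x)" for x
    using B'_ge[OF zN] \<alpha>' by (meson order_trans mult_nonneg_nonneg less_imp_le zero_le_power2)
  obtain g where g: "g > 0" "\<And>y. norm (G' y) \<le> g * norm y" using linear_bounded_pos[OF linG'] by blast
  obtain c where c: "c > 0" "\<And>y. norm (K y) \<le> c * norm y" using linear_bounded_pos[OF linK] by blast
  define \<rho> where "\<rho> = c\<^sup>2 / (2 * \<alpha>') + 1"
  have \<rho>: "\<rho> > 0" "c\<^sup>2 / (2 * \<alpha>') \<le> \<rho>" unfolding \<rho>_def using \<alpha>' by (auto intro: add_nonneg_pos)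
  define B where "B x y = \<rho> * B' (z x) (z y) + ?PR x \<bullet> ?PR y" for x y
  define \<alpha> where "\<alpha> = min 1 (\<rho> * \<alpha>') / (2 * (1 + g)\<^sup>2)"
  have \<alpha>: "\<alpha> > 0" unfolding \<alpha>_def using \<rho> \<alpha>' g by auto
  have Bxx: "B x x = \<rho> * B' (z x) (z x) + (norm (?PR x))\<^sup>2" for x
    unfolding B_def by (simp add: power2_norm_eq_inner)
  have "quadratic_lyapunov X M \<mu> B \<alpha>"
    unfolding quadratic_lyapunov_def
  proof (intro conjI ballI allI)
    show "bilinear B" unfolding B_def[abs_def] using bilB' linz linPR by (rule bilinear_pullback_plus_inner)
    show "B x y = B y x" for x y unfolding B_def using symB' by (simp add: inner_commute)
    show "\<alpha> > 0" by (rule \<alpha>)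
  next
    fix x assume x: "x \<in> X"
    define a where "a = ?PR x"
    have "norm (?PN x) \<le> norm (z x) + g * norm a"
      using norm_triangle_ineq4[of "z x" "G' a"] g(2)[of a] by (simp add: z_def a_def)
    moreover have "0 \<le> g * norm (z x)" using g(1) by simp
    ultimately have "norm x \<le> (1 + g) * (norm a + norm (z x))"
      using norm_triangle_ineq[of a "?PN x"] split[OF x] unfolding a_def
      by (simp add: algebra_simps)
    then have "(norm x)\<^sup>2 \<le> ((1 + g) * (norm a + norm (z x)))\<^sup>2"
      by (simp add: power_mono)
    also have "\<dots> = (1 + g)\<^sup>2 * (norm a + norm (z x))\<^sup>2" by (simp add: power_mult_distrib)
    also have "\<dots> \<le> (1 + g)\<^sup>2 * (2 * ((norm a)\<^sup>2 + (norm (z x))\<^sup>2))"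
      using sum_squares_bound[of "norm a" "norm (z x)"] by (intro mult_left_mono) (simp add: power2_sum, simp)
    finally have nx: "(norm x)\<^sup>2 \<le> (1 + g)\<^sup>2 * (2 * ((norm a)\<^sup>2 + (norm (z x))\<^sup>2))" .
    have "min 1 (\<rho> * \<alpha>') * (norm (z x))\<^sup>2 \<le> \<rho> * \<alpha>' * (norm (z x))\<^sup>2"
      by (intro mult_right_mono) auto
    also have "\<dots> \<le> \<rho> * B' (z x) (z x)"
      using B'_ge[OF zN, of x] \<rho>(1) by (simp add: mult.assoc)
    finally have "min 1 (\<rho> * \<alpha>') * (norm (z x))\<^sup>2 \<le> \<rho> * B' (z x) (z x)" .
    moreover have "min 1 (\<rho> * \<alpha>') * (norm a)\<^sup>2 \<le> (norm a)\<^sup>2"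
      using mult_right_mono[of "min 1 (\<rho> * \<alpha>')" 1 "(norm a)\<^sup>2"] by simp
    ultimately have "min 1 (\<rho> * \<alpha>') * ((norm a)\<^sup>2 + (norm (z x))\<^sup>2) \<le> B x x"
      unfolding Bxx a_def by (simp add: algebra_simps)
    moreover have "\<alpha> * (norm x)\<^sup>2 \<le> \<alpha> * ((1 + g)\<^sup>2 * (2 * ((norm a)\<^sup>2 + (norm (z x))\<^sup>2)))"
      using nx \<alpha> by (intro mult_left_mono) auto
    moreover have "\<alpha> * ((1 + g)\<^sup>2 * (2 * ((norm a)\<^sup>2 + (norm (z x))\<^sup>2)))
        = min 1 (\<rho> * \<alpha>') * ((norm a)\<^sup>2 + (norm (z x))\<^sup>2)"
      unfolding \<alpha>_def using g(1) by (simp add: field_simps)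
    ultimately show "\<alpha> * (norm x)\<^sup>2 \<le> B x x" by linarith
  next
    fix x assume x: "x \<in> X"
    define a where "a = ?PR x"
    define w where "w = z x"
    have "a \<bullet> K w \<le> norm a * (c * norm w)"
      using Cauchy_Schwarz_ineq2[of a "K w"] c(2)[of w]
      by (meson abs_le_D1 mult_left_mono norm_ge_zero order_trans)
    also have "\<dots> \<le> (norm a)\<^sup>2 / 2 + (c * norm w)\<^sup>2 / 2"
      using mult_le_weighted_squares[of 1 "norm a" "c * norm w"] by simp
    also have "(c * norm w)\<^sup>2 / 2 = c\<^sup>2 / (2 * \<alpha>') * (\<alpha>' * (norm w)\<^sup>2)"
      using \<alpha>' by (simp add: power_mult_distrib field_simps)
    also have "\<dots> \<le> c\<^sup>2 / (2 * \<alpha>') * B' w w"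
      using B'_ge[OF zN, of x] \<alpha>' unfolding w_def by (intro mult_left_mono) auto
    also have "\<dots> \<le> \<rho> * B' w w" using \<rho>(2) B'_nonneg[of x] unfolding w_def by (rule mult_right_mono)
    finally have cross: "a \<bullet> K w \<le> (norm a)\<^sup>2 / 2 + \<rho> * B' w w" by simp
    have "B x (M x) = \<rho> * B' w (Mz w) + a \<bullet> K w - (\<mu> + 1) * (norm a)\<^sup>2"
      unfolding B_def R_dyn[OF x] z_dyn[OF x] a_def w_def
      by (simp add: inner_diff_right power2_norm_eq_inner)
    also have "\<dots> \<le> \<rho> * (- (\<mu> + 1) * B' w w) + ((norm a)\<^sup>2 / 2 + \<rho> * B' w w) - (\<mu> + 1) * (norm a)\<^sup>2"
      using mult_left_mono[OF B'_dec[OF zN, of x], of \<rho>] \<rho>(1) cross unfolding w_def by linarith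
    also have "\<dots> = - \<mu> * B x x - (norm a)\<^sup>2 / 2"
      unfolding Bxx a_def w_def by (simp add: algebra_simps)
    finally show "B x (M x) \<le> - \<mu> * B x x" using zero_le_power2[of "norm a"] by linarith
  qed
  then show ?thesis by (rule that)
qed

text \<open>Induction on \<open>dim X\<close>: the kernel \<open>N\<close> of \<open>C\<close> in \<open>X\<close> is a proper subspace carrying an
  observable system of lower dimension, whose Lyapunov function for the faster rate
  \<open>\<mu> + 1\<close> is lifted to \<open>X\<close> by the cascade construction.\<close>
theorem observable_output_injection_lyapunov:
  fixes X :: "(real^'n) set" and A C :: "real^'n \<Rightarrow> real^'n"
  assumes "subspace X" "linear A" "\<forall>x\<in>X. A x \<in> X" "linear C" "observable_on X A C"
  shows "\<exists>G B \<alpha>. linear G \<and> (\<forall>y. G y \<in> X) \<and> quadratic_lyapunov X (\<lambda>x. A x + G (C x)) \<mu> B \<alpha>"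
  using assms
proof (induction "dim X" arbitrary: X A C \<mu> rule: less_induct)
  case less
  note X = less.prems(1) and linA = less.prems(2) and AX = less.prems(3) and linC = less.prems(4)
    and obs = less.prems(5)
  show ?case
  proof (cases "X \<subseteq> {0}")
    case True
    then have "quadratic_lyapunov X (\<lambda>x. A x + 0) \<mu> (\<bullet>) 1"
      unfolding quadratic_lyapunov_def using bilinear_inner_real
      by (auto simp: inner_commute power2_norm_eq_inner)
    moreover have "linear (\<lambda>y::real^'n. 0::real^'n)" by (simp add: linear_zero)
    ultimately show ?thesis using subspace_0[OF X] by blast
  next
    case False
    define N where "N = {x\<in>X. C x = 0}"
    let ?R = "orth_compl_in X N"
    have N: "subspace N"
      unfolding N_def using X linC unfolding subspace_def by (auto simp: linear_add linear_scale linear_0)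
    have NX: "N \<subseteq> X" unfolding N_def by auto
    have "N \<noteq> X"
    proof
      assume "N = X"
      then have "X \<subseteq> {0}"
        using obs[unfolded observable_on_def, rule_format, of X] X AX unfolding N_def by blast
      then show False using False by blast
    qed
    moreover have "span N = N" "span X = X" using N X by (simp_all add: span_eq_iff)
    ultimately have "span N \<subset> span X" using NX by (simp only: psubset_eq) blast
    then have dimN: "dim N < dim X" by (rule dim_psubset)
    have linPNA: "linear (\<lambda>x. orth_proj N (A x))" and linPRA: "linear (\<lambda>x. orth_proj ?R (A x))"
      using linear_compose[OF linA linear_orth_proj] N subspace_orth_compl_in[OF X]
      unfolding o_def by blast+
    have PNA_N: "\<forall>x\<in>N. orth_proj N (A x) \<in> N" using N orth_proj_in by blast
    have obsN: "observable_on N (\<lambda>x. orth_proj N (A x)) (\<lambda>x. orth_proj ?R (A x))"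
      using X AX obs N N_def by (rule observable_on_kernel)
    obtain G' B' \<alpha>' where linG': "linear G'" and G'N: "\<forall>y. G' y \<in> N"
      and lyapN: "quadratic_lyapunov N (\<lambda>x. orth_proj N (A x) + G' (orth_proj ?R (A x))) (\<mu> + 1) B' \<alpha>'"
      using less.hyps[OF dimN N linPNA PNA_N linPRA obsN] by blast
    obtain G where linG: "linear G" and GX: "\<And>y. G y \<in> X"
      and R_dyn: "\<And>x. x \<in> X \<Longrightarrow> orth_proj ?R (A x + G (C x))
        = orth_proj ?R (A (orth_proj N x + G' (orth_proj ?R x))) - (\<mu> + 1) *\<^sub>R orth_proj ?R x"
      and z_dyn: "\<And>x. x \<in> X \<Longrightarrow> orth_proj N (A x + G (C x)) + G' (orth_proj ?R (A x + G (C x)))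
        = orth_proj N (A (orth_proj N x + G' (orth_proj ?R x)))
          + G' (orth_proj ?R (A (orth_proj N x + G' (orth_proj ?R x))))"
      by (rule cascade_output_injection[where \<gamma> = "\<mu> + 1", OF X linA AX linC N N_def linG' G'N[rule_format]]) blast
    obtain B \<alpha> where "quadratic_lyapunov X (\<lambda>x. A x + G (C x)) \<mu> B \<alpha>"
      by (rule cascade_lyapunov[where M = "\<lambda>x. A x + G (C x)" and K = "\<lambda>x. orth_proj ?R (A x)",
            OF X N NX linG' G'N[rule_format] linPRA lyapN R_dyn z_dyn]) blast
    then show ?thesis using linG GX by blast
  qed
qed

section \<open>Consensus\<close>

lemma sum_dist_subspaces_coercive:
  fixes Vs :: "nat \<Rightarrow> (real^'n) set"
  assumes sub: "\<forall>i<m. subspace (Vs i)" and int: "\<forall>z. (\<forall>i<m. z \<in> Vs i) \<longrightarrow> z = 0"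
  shows "\<exists>\<gamma>>0. \<forall>z. \<gamma> * (norm z)\<^sup>2 \<le> (\<Sum>i<m. (norm (z - orth_proj (Vs i) z))\<^sup>2)"
proof -
  define f where "f = (\<lambda>z. \<Sum>i<m. (norm (z - orth_proj (Vs i) z))\<^sup>2)"
  have lin: "linear (orth_proj (Vs i))" if "i < m" for i using sub that linear_orth_proj by blast
  have cont: "continuous_on (sphere 0 1) f" unfolding f_def
    by (intro continuous_intros linear_continuous_on) (auto simp: lin linear_linear)
  obtain e :: "real^'n" where e: "norm e = 1" using vector_choose_size[of 1] by auto
  then have ne: "sphere (0::real^'n) 1 \<noteq> {}" by auto
  obtain z0 where z0: "z0 \<in> sphere 0 1" "\<forall>y\<in>sphere 0 1. f z0 \<le> f y"
    using continuous_attains_inf[OF compact_sphere ne cont] by blast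
  have "f z0 > 0"
  proof (rule ccontr)
    assume "\<not> f z0 > 0"
    then have "f z0 = 0" unfolding f_def by (metis (no_types, lifting) le_less sum_nonneg zero_le_power2)
    then have "\<forall>i<m. (norm (z0 - orth_proj (Vs i) z0))\<^sup>2 = 0" unfolding f_def
      by (simp add: sum_nonneg_eq_0_iff)
    then have "\<forall>i<m. z0 \<in> Vs i" using sub orth_proj_in by (metis eq_iff_diff_eq_0 norm_eq_zero power_eq_0_iff)
    then have "z0 = 0" using int by blast
    then show False using z0 by simp
  qed
  show ?thesis
  proof (intro exI conjI allI)
    show "f z0 > 0" by fact
    fix z :: "real^'n"
    show "f z0 * (norm z)\<^sup>2 \<le> (\<Sum>i<m. (norm (z - orth_proj (Vs i) z))\<^sup>2)"
    proof (cases "z = 0")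
      case True then show ?thesis by (simp add: sum_nonneg)
    next
      case False
      define u where "u = z /\<^sub>R norm z"
      have "u \<in> sphere 0 1" unfolding u_def using False by simp
      then have "f z0 \<le> f u" using z0 by blast
      also have "f u = f z / (norm z)\<^sup>2"
      proof -
        have "(norm (u - orth_proj (Vs i) u))\<^sup>2 = (norm (z - orth_proj (Vs i) z))\<^sup>2 / (norm z)\<^sup>2" if "i < m" for i
        proof -
          have "u - orth_proj (Vs i) u = (z - orth_proj (Vs i) z) /\<^sub>R norm z"
            unfolding u_def using lin[OF that] by (simp add: linear_scale scaleR_diff_right)
          then show ?thesis by (simp add: power_mult_distrib power_inverse divide_inverse mult.commute)
        qed
        then show ?thesis unfolding f_def by (simp add: sum_divide_distrib)
      qed
      finally have "f z0 * (norm z)\<^sup>2 \<le> f z" using False by (simp add: field_simps)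
      then show ?thesis unfolding f_def .
    qed
  qed
qed

lemma Smat_nonneg: "Smat E m p i j \<ge> 0"
  unfolding Smat_def by simp

lemma Smat_le_1: "Smat E m p i j \<le> 1"
proof (cases "j \<in> nbrs E m p i")
  case True
  moreover have "finite (nbrs E m p i)" unfolding nbrs_def by simp
  ultimately have "card (nbrs E m p i) \<ge> 1" by (metis One_nat_def Suc_leI card_gt_0_iff empty_iff)
  then show ?thesis unfolding Smat_def using True by simp
qed (simp add: Smat_def)

lemma doubly_stochastic_quadratic_form:
  fixes w :: "nat \<Rightarrow> real^'n"
  assumes ds: "doubly_stochastic m S"
  shows "(\<Sum>i<m. (norm (w i))\<^sup>2) - (\<Sum>i<m. \<Sum>j<m. S i j * (w i \<bullet> w j))
         = (\<Sum>i<m. \<Sum>j<m. S i j * (norm (w i - w j))\<^sup>2) / 2"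
proof -
  have row: "(\<Sum>i<m. \<Sum>j<m. S i j * (norm (w i))\<^sup>2) = (\<Sum>i<m. (norm (w i))\<^sup>2)"
  proof -
    have "(\<Sum>i<m. \<Sum>j<m. S i j * (norm (w i))\<^sup>2) = (\<Sum>i<m. (\<Sum>j<m. S i j) * (norm (w i))\<^sup>2)"
      by (simp add: sum_distrib_right)
    also have "\<dots> = (\<Sum>i<m. (norm (w i))\<^sup>2)" using ds unfolding doubly_stochastic_def by simp
    finally show ?thesis .
  qed
  have col: "(\<Sum>i<m. \<Sum>j<m. S i j * (norm (w j))\<^sup>2) = (\<Sum>j<m. (norm (w j))\<^sup>2)"
  proof -
    have "(\<Sum>i<m. \<Sum>j<m. S i j * (norm (w j))\<^sup>2) = (\<Sum>j<m. \<Sum>i<m. S i j * (norm (w j))\<^sup>2)"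
      by (rule sum.swap)
    also have "\<dots> = (\<Sum>j<m. (\<Sum>i<m. S i j) * (norm (w j))\<^sup>2)"
      by (simp add: sum_distrib_right)
    also have "\<dots> = (\<Sum>j<m. (norm (w j))\<^sup>2)" using ds unfolding doubly_stochastic_def by simp
    finally show ?thesis .
  qed
  have "(\<Sum>i<m. \<Sum>j<m. S i j * (norm (w i - w j))\<^sup>2)
      = (\<Sum>i<m. \<Sum>j<m. S i j * (norm (w i))\<^sup>2) + (\<Sum>i<m. \<Sum>j<m. S i j * (norm (w j))\<^sup>2)
        - 2 * (\<Sum>i<m. \<Sum>j<m. S i j * (w i \<bullet> w j))"
    by (simp add: power2_norm_eq_inner inner_diff_left inner_diff_right inner_commute
        algebra_simps sum.distrib sum_subtractf sum_distrib_left)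
  then show ?thesis using row col by simp
qed

definition disagreement :: "('p \<Rightarrow> nat \<Rightarrow> nat \<Rightarrow> bool) \<Rightarrow> nat \<Rightarrow> 'p \<Rightarrow> (nat \<Rightarrow> real^'n) \<Rightarrow> real" where
  "disagreement E m p w = (\<Sum>i<m. \<Sum>j<m. Smat E m p i j * (norm (w i - w j))\<^sup>2) / 2"

lemma disagreement_nonneg: "disagreement E m p w \<ge> 0"
  unfolding disagreement_def by (intro divide_nonneg_pos sum_nonneg mult_nonneg_nonneg Smat_nonneg) auto

lemma disagreement_arc_bound:
  fixes w :: "nat \<Rightarrow> real^'n"
  assumes ab: "(a, b) \<in> arcs E m p"
  shows "norm (w a - w b) \<le> sqrt (2 * real m) * sqrt (disagreement E m p w)"
proof -
  have a: "a < m" "b < m" "E p a b" using ab unfolding arcs_def by auto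
  have an: "a \<in> nbrs E m p b" using a unfolding nbrs_def by auto
  have fin: "finite (nbrs E m p b)" unfolding nbrs_def by auto
  have cpos: "card (nbrs E m p b) > 0" using an fin card_gt_0_iff by blast
  have cle: "card (nbrs E m p b) \<le> m"
  proof -
    have "nbrs E m p b \<subseteq> {..<m}" unfolding nbrs_def by auto
    then show ?thesis using card_mono[of "{..<m}"] by fastforce
  qed
  have S: "Smat E m p b a = 1 / real (card (nbrs E m p b))" unfolding Smat_def using an by simp
  have Sge: "1 / real m \<le> Smat E m p b a" unfolding S using cpos cle
    by (simp add: frac_le)
  have mpos: "real m > 0" using a by simp
  have tm: "Smat E m p b a * (norm (w b - w a))\<^sup>2 \<le> 2 * disagreement E m p w"
  proof -
    have "Smat E m p b a * (norm (w b - w a))\<^sup>2 \<le> (\<Sum>j<m. Smat E m p b j * (norm (w b - w j))\<^sup>2)"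
      using a by (intro member_le_sum[where f="\<lambda>j. Smat E m p b j * (norm (w b - w j))\<^sup>2"])
        (auto intro: mult_nonneg_nonneg Smat_nonneg)
    also have "\<dots> \<le> (\<Sum>i<m. \<Sum>j<m. Smat E m p i j * (norm (w i - w j))\<^sup>2)"
      using a by (intro member_le_sum[where f="\<lambda>i. \<Sum>j<m. Smat E m p i j * (norm (w i - w j))\<^sup>2"])
        (auto intro!: sum_nonneg mult_nonneg_nonneg Smat_nonneg)
    finally show ?thesis unfolding disagreement_def by simp
  qed
  have "(norm (w a - w b))\<^sup>2 = real m * ((1 / real m) * (norm (w b - w a))\<^sup>2)"
    using mpos by (simp add: norm_minus_commute)
  also have "\<dots> \<le> real m * (Smat E m p b a * (norm (w b - w a))\<^sup>2)"
    using Sge mpos by (intro mult_left_mono mult_right_mono) auto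
  also have "\<dots> \<le> real m * (2 * disagreement E m p w)" using tm mpos by (intro mult_left_mono) auto
  finally have "(norm (w a - w b))\<^sup>2 \<le> (sqrt (2 * real m) * sqrt (disagreement E m p w))\<^sup>2"
    using disagreement_nonneg[of E m p w] mpos by (simp add: power_mult_distrib)
  then show ?thesis by (rule power2_le_imp_le) (simp add: disagreement_nonneg)
qed

lemma disagreement_path_bound:
  assumes "(i, j) \<in> (arcs E m p)\<^sup>*"
  shows "\<exists>L\<ge>0. \<forall>w :: nat \<Rightarrow> real^'n. norm (w i - w j) \<le> L * sqrt (disagreement E m p w)"
  using assms
proof (induction rule: rtrancl_induct)
  case base
  show ?case by (intro exI[of _ 0]) simp
next
  case (step k j)
  then obtain L where L: "L \<ge> 0" "\<forall>w :: nat \<Rightarrow> real^'n. norm (w i - w k) \<le> L * sqrt (disagreement E m p w)" by blast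
  show ?case
  proof (intro exI conjI allI)
    show "L + sqrt (2 * real m) \<ge> 0" using L by simp
    fix w :: "nat \<Rightarrow> real^'n"
    have "norm (w i - w j) \<le> norm (w i - w k) + norm (w k - w j)" by (rule norm_diff_triangle_ineq[of "w i" "w k" "w k" "w j", simplified])
    also have "\<dots> \<le> L * sqrt (disagreement E m p w) + sqrt (2 * real m) * sqrt (disagreement E m p w)"
      using L(2) disagreement_arc_bound[OF step(2), of w] by (intro add_mono) auto
    finally show "norm (w i - w j) \<le> (L + sqrt (2 * real m)) * sqrt (disagreement E m p w)"
      by (simp add: algebra_simps)
  qed
qed

lemma disagreement_uniform_bound:
  assumes fin: "finite P" and conn: "\<forall>p\<in>P. strongly_connected E m p"
  shows "\<exists>L. \<forall>p\<in>P. \<forall>i<m. \<forall>j<m. \<forall>w :: nat \<Rightarrow> real^'n.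
    norm (w i - w j) \<le> L * sqrt (disagreement E m p w)"
proof -
  define I where "I = P \<times> {..<m} \<times> {..<m}"
  have "\<forall>x\<in>I. \<exists>L\<ge>0. \<forall>w :: nat \<Rightarrow> real^'n.
      norm (w (fst (snd x)) - w (snd (snd x))) \<le> L * sqrt (disagreement E m (fst x) w)"
  proof
    fix x assume "x \<in> I"
    then have "(fst (snd x), snd (snd x)) \<in> (arcs E m (fst x))\<^sup>*"
      using conn unfolding I_def strongly_connected_def by auto
    then show "\<exists>L\<ge>0. \<forall>w :: nat \<Rightarrow> real^'n.
        norm (w (fst (snd x)) - w (snd (snd x))) \<le> L * sqrt (disagreement E m (fst x) w)"
      by (rule disagreement_path_bound)
  qed
  then obtain Lf where Lf: "\<And>x. x \<in> I \<Longrightarrow> Lf x \<ge> 0 \<and> (\<forall>w :: nat \<Rightarrow> real^'n.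
      norm (w (fst (snd x)) - w (snd (snd x))) \<le> Lf x * sqrt (disagreement E m (fst x) w))"
    by metis
  show ?thesis
  proof (intro exI[of _ "\<Sum>x\<in>I. Lf x"] ballI allI impI)
    fix p i j and w :: "nat \<Rightarrow> real^'n" assume "p \<in> P" "i < m" "j < m"
    then have x: "(p, i, j) \<in> I" unfolding I_def by auto
    have "Lf (p, i, j) \<le> (\<Sum>x\<in>I. Lf x)"
      using x fin Lf unfolding I_def by (intro member_le_sum) auto
    then have "Lf (p, i, j) * sqrt (disagreement E m p w) \<le> (\<Sum>x\<in>I. Lf x) * sqrt (disagreement E m p w)"
      by (intro mult_right_mono) (auto simp: disagreement_nonneg)
    moreover have "norm (w i - w j) \<le> Lf (p, i, j) * sqrt (disagreement E m p w)"
      using Lf[OF x] by simp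
    ultimately show "norm (w i - w j) \<le> (\<Sum>x\<in>I. Lf x) * sqrt (disagreement E m p w)" by linarith
  qed
qed

text \<open>Vectors \<open>w\<^sub>i \<in> V\<^sub>i\<close> that are pairwise close are small, because a common vector close
  to every \<open>V\<^sub>i\<close> is small when the \<open>V\<^sub>i\<close> intersect trivially.\<close>
lemma sum_sq_le_of_close_in_subspaces:
  fixes w :: "nat \<Rightarrow> real^'n" and Vs :: "nat \<Rightarrow> (real^'n) set"
  assumes sub: "\<forall>i<m. subspace (Vs i)" and \<gamma>: "\<gamma> > 0"
    and coercive: "\<And>z. \<gamma> * (norm z)\<^sup>2 \<le> (\<Sum>i<m. (norm (z - orth_proj (Vs i) z))\<^sup>2)"
    and w: "\<forall>i<m. w i \<in> Vs i" and close: "\<And>i. i < m \<Longrightarrow> norm (w 0 - w i) \<le> D"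
  shows "(\<Sum>i<m. (norm (w i))\<^sup>2) \<le> real m * (2 * real m / \<gamma> + 2) * D\<^sup>2"
proof -
  have "(norm (w 0 - orth_proj (Vs i) (w 0)))\<^sup>2 \<le> D\<^sup>2" if i: "i < m" for i
  proof -
    have "norm (w 0 - orth_proj (Vs i) (w 0)) \<le> norm (w 0 - w i)"
      using sub w i by (intro norm_orth_proj_le_dist) auto
    also have "\<dots> \<le> D" by (rule close[OF i])
    finally show ?thesis by (rule power_mono) simp
  qed
  then have "(\<Sum>i<m. (norm (w 0 - orth_proj (Vs i) (w 0)))\<^sup>2) \<le> (\<Sum>i<m. D\<^sup>2)"
    by (intro sum_mono) auto
  then have "\<gamma> * (norm (w 0))\<^sup>2 \<le> real m * D\<^sup>2" using coercive[of "w 0"] by simp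
  then have w0: "(norm (w 0))\<^sup>2 \<le> real m * D\<^sup>2 / \<gamma>" using \<gamma> by (simp add: field_simps)
  have "(norm (w i))\<^sup>2 \<le> (2 * real m / \<gamma> + 2) * D\<^sup>2" if i: "i < m" for i
  proof -
    have "norm (w i) \<le> norm (w 0) + D"
      using close[OF i] norm_triangle_ineq2[of "w i" "w 0"] by (simp add: norm_minus_commute)
    then have "(norm (w i))\<^sup>2 \<le> (norm (w 0) + D)\<^sup>2" by (simp add: power_mono)
    also have "\<dots> \<le> 2 * (norm (w 0))\<^sup>2 + 2 * D\<^sup>2"
      using sum_squares_bound[of "norm (w 0)" D] by (simp add: power2_sum)
    also have "\<dots> \<le> 2 * (real m * D\<^sup>2 / \<gamma>) + 2 * D\<^sup>2" using w0 by simp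
    finally show ?thesis by (simp add: algebra_simps)
  qed
  then have "(\<Sum>i<m. (norm (w i))\<^sup>2) \<le> (\<Sum>i<m. (2 * real m / \<gamma> + 2) * D\<^sup>2)" by (intro sum_mono) auto
  then show ?thesis by simp
qed

lemma consensus_form_lower_bound:
  fixes Vs :: "nat \<Rightarrow> (real^'n) set"
  assumes m: "m > 0" and fin: "finite P"
    and graphs: "\<forall>p\<in>P. strongly_connected E m p \<and> doubly_stochastic m (Smat E m p)"
    and sub: "\<forall>i<m. subspace (Vs i)" and int: "\<forall>z. (\<forall>i<m. z \<in> Vs i) \<longrightarrow> z = 0"
  shows "\<exists>\<beta>>0. \<forall>p\<in>P. \<forall>w::nat\<Rightarrow>real^'n. (\<forall>i<m. w i \<in> Vs i) \<longrightarrow>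
     \<beta> * (\<Sum>i<m. (norm (w i))\<^sup>2) \<le> (\<Sum>i<m. (norm (w i))\<^sup>2) - (\<Sum>i<m. \<Sum>j<m. Smat E m p i j * (w i \<bullet> w j))"
proof -
  obtain \<gamma> where \<gamma>: "\<gamma> > 0" "\<And>z. \<gamma> * (norm z)\<^sup>2 \<le> (\<Sum>i<m. (norm (z - orth_proj (Vs i) z))\<^sup>2)"
    using sum_dist_subspaces_coercive[OF sub int] by blast
  have "\<forall>p\<in>P. strongly_connected E m p" using graphs by blast
  then obtain L where L: "\<forall>p\<in>P. \<forall>i<m. \<forall>j<m. \<forall>w :: nat \<Rightarrow> real^'n.
      norm (w i - w j) \<le> L * sqrt (disagreement E m p w)"
    using disagreement_uniform_bound[OF fin] by blast
  define K where "K = real m * (2 * real m / \<gamma> + 2) * L\<^sup>2"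
  have K: "K \<ge> 0" unfolding K_def using \<gamma> by simp
  show ?thesis
  proof (intro exI[of _ "1 / (K + 1)"] conjI ballI allI impI)
    show "1 / (K + 1) > 0" using K by simp
    fix p w assume p: "p \<in> P" and w: "\<forall>i<m. w i \<in> Vs i"
    define Q where "Q = disagreement E m p w"
    have Q: "Q \<ge> 0" unfolding Q_def by (rule disagreement_nonneg)
    have "(\<Sum>i<m. (norm (w i))\<^sup>2) \<le> real m * (2 * real m / \<gamma> + 2) * (L * sqrt Q)\<^sup>2"
      using sub \<gamma> w L[rule_format, OF p m] unfolding Q_def by (rule sum_sq_le_of_close_in_subspaces)
    also have "\<dots> = K * Q" unfolding K_def using Q by (simp add: power_mult_distrib)
    also have "\<dots> \<le> (K + 1) * Q" using Q by (simp add: mult_right_mono)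
    finally have "1 / (K + 1) * (\<Sum>i<m. (norm (w i))\<^sup>2) \<le> Q" using K by (simp add: field_simps)
    also have "Q = (\<Sum>i<m. (norm (w i))\<^sup>2) - (\<Sum>i<m. \<Sum>j<m. Smat E m p i j * (w i \<bullet> w j))"
      using doubly_stochastic_quadratic_form[of m "Smat E m p" w] graphs p
      unfolding Q_def disagreement_def by simp
    finally show "1 / (K + 1) * (\<Sum>i<m. (norm (w i))\<^sup>2)
        \<le> (\<Sum>i<m. (norm (w i))\<^sup>2) - (\<Sum>i<m. \<Sum>j<m. Smat E m p i j * (w i \<bullet> w j))" .
  qed
qed

section \<open>A common Lyapunov function for the estimation error\<close>

lemma observer_error_observable_part:
  fixes A :: "real^'n^'n" and e r :: "real^'n" and g :: real
  assumes V: "subspace V" and AV: "\<And>v. v \<in> V \<Longrightarrow> A *v v \<in> V" and linL: "linear L"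
    and LV: "\<And>v. v \<in> V \<Longrightarrow> L v = 0" and L_orth: "\<And>y v. v \<in> V \<Longrightarrow> L y \<bullet> v = 0"
  defines "u \<equiv> e - orth_proj V e" and "d \<equiv> A *v e + L e - g *\<^sub>R orth_proj V r"
  shows "d - orth_proj V d = (A *v u - orth_proj V (A *v u)) + L u"
proof -
  let ?P = "orth_proj V"
  define w where "w = ?P e"
  have w: "w \<in> V" unfolding w_def using V by (rule orth_proj_in)
  have e: "e = w + u" unfolding w_def u_def by simp
  have "L e = L u" using linear_add[OF linL] LV[OF w] e by (metis add_0)
  then have d: "d = A *v w + A *v u + L u - g *\<^sub>R ?P r"
    unfolding d_def by (subst e) (simp add: matrix_vector_right_distrib)
  have "?P (A *v w) = A *v w" using V AV[OF w] by (rule orth_proj_eq_self)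
  moreover have "?P (L u) = 0" using V L_orth by (rule orth_proj_eq_0)
  moreover have "?P (?P r) = ?P r" using V orth_proj_in[OF V] by (rule orth_proj_eq_self)
  ultimately have "?P d = A *v w + ?P (A *v u) - g *\<^sub>R ?P r"
    unfolding d using linear_orth_proj[OF V] by (simp add: linear_add linear_diff linear_scale)
  then show ?thesis unfolding d by simp
qed

lemma observer_error_unobservable_part:
  fixes A :: "real^'n^'n" and e :: "real^'n"
  assumes V: "subspace V" and L_orth: "\<And>y v. v \<in> V \<Longrightarrow> L y \<bullet> v = 0"
  defines "w \<equiv> orth_proj V e"
  shows "w \<bullet> orth_proj V (A *v e + L e - g *\<^sub>R orth_proj V r) = w \<bullet> (A *v e) - g * (w \<bullet> r)"
proof -
  have w: "w \<in> V" unfolding w_def using V by (rule orth_proj_in)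
  have "w \<bullet> L e = 0" using L_orth[OF w] by (simp add: inner_commute)
  then show ?thesis
    using inner_orth_proj_right[OF V w] by (simp add: inner_diff_right inner_add_right)
qed

lemma inner_mult_vec_le:
  fixes A :: "real^'n^'n"
  assumes A: "\<And>y. norm (A *v y) \<le> a * norm y" and a: "a \<ge> 0"
  shows "w \<bullet> (A *v (w + u)) \<le> (a + 1/2) * (norm w)\<^sup>2 + a\<^sup>2/2 * (norm u)\<^sup>2"
proof -
  have "w \<bullet> (A *v (w + u)) \<le> norm w * (a * norm (w + u))"
    using Cauchy_Schwarz_ineq2[of w "A *v (w + u)"] A[of "w + u"]
    by (meson abs_le_D1 mult_left_mono norm_ge_zero order_trans)
  also have "\<dots> \<le> norm w * (a * (norm w + norm u))"
    using a norm_triangle_ineq[of w u] by (intro mult_left_mono) auto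
  also have "\<dots> = a * (norm w)\<^sup>2 + norm w * (a * norm u)"
    by (simp add: algebra_simps power2_eq_square)
  also have "norm w * (a * norm u) \<le> (norm w)\<^sup>2 / (2 * 1) + 1 * (a * norm u)\<^sup>2 / 2"
    by (rule mult_le_weighted_squares) simp
  finally show ?thesis by (simp add: power_mult_distrib algebra_simps)
qed

lemma weighted_inner_sum_le:
  fixes w :: "'a::real_inner" and u :: "nat \<Rightarrow> 'a"
  assumes m: "m > 0" and g: "g \<ge> 0" and S: "\<And>j. 0 \<le> S j" "\<And>j. S j \<le> 1"
  shows "g * (\<Sum>j<m. S j * (w \<bullet> u j)) \<le> (norm w)\<^sup>2 / 2 + real m * g\<^sup>2 / 2 * (\<Sum>j<m. (norm (u j))\<^sup>2)"
proof -
  have "g * S j * (w \<bullet> u j) \<le> (norm w)\<^sup>2 / (2 * real m) + real m * g\<^sup>2 * (norm (u j))\<^sup>2 / 2" for j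
  proof -
    have "g * S j * (w \<bullet> u j) \<le> g * S j * (norm w * norm (u j))"
      using g S(1)[of j] Cauchy_Schwarz_ineq2[of w "u j"] by (intro mult_left_mono) auto
    also have "\<dots> \<le> norm w * (g * norm (u j))"
      using mult_right_mono[OF mult_left_mono[OF S(2)[of j] g], of "norm w * norm (u j)"]
      by (simp add: algebra_simps)
    also have "\<dots> \<le> (norm w)\<^sup>2 / (2 * real m) + real m * (g * norm (u j))\<^sup>2 / 2"
      using m by (intro mult_le_weighted_squares) simp
    finally show ?thesis by (simp add: power_mult_distrib)
  qed
  then have "g * (\<Sum>j<m. S j * (w \<bullet> u j))
      \<le> (\<Sum>j<m. (norm w)\<^sup>2 / (2 * real m) + real m * g\<^sup>2 * (norm (u j))\<^sup>2 / 2)"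
    unfolding sum_distrib_left mult.assoc[symmetric] by (rule sum_mono)
  also have "\<dots> = (norm w)\<^sup>2 / 2 + real m * g\<^sup>2 / 2 * (\<Sum>j<m. (norm (u j))\<^sup>2)"
    using m by (simp add: sum.distrib sum_distrib_left sum_divide_distrib)
  finally show ?thesis .
qed

lemma observer_error_unobservable_estimate:
  fixes A :: "real^'n^'n" and e :: "nat \<Rightarrow> real^'n" and V :: "nat \<Rightarrow> (real^'n) set"
    and L :: "nat \<Rightarrow> real^'n \<Rightarrow> real^'n" and S :: "nat \<Rightarrow> nat \<Rightarrow> real"
  assumes m: "m > 0" and sub: "\<And>i. i < m \<Longrightarrow> subspace (V i)"
    and L_orth: "\<And>i y v. i < m \<Longrightarrow> v \<in> V i \<Longrightarrow> L i y \<bullet> v = 0"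
    and aA: "\<And>y. norm (A *v y) \<le> aA * norm y" "aA \<ge> 0"
    and cons: "\<And>w. (\<forall>i<m. w i \<in> V i) \<Longrightarrow>
      \<beta> * (\<Sum>i<m. (norm (w i))\<^sup>2) \<le> (\<Sum>i<m. (norm (w i))\<^sup>2) - (\<Sum>i<m. \<Sum>j<m. S i j * (w i \<bullet> w j))"
    and S: "\<And>i j. 0 \<le> S i j" "\<And>i j. S i j \<le> 1"
    and g: "g \<ge> 0" "g * \<beta> \<ge> aA + 1 + lam"
  defines "w \<equiv> \<lambda>i. orth_proj (V i) (e i)" and "u \<equiv> \<lambda>i. e i - orth_proj (V i) (e i)"
  shows "(\<Sum>i<m. w i \<bullet> orth_proj (V i) (A *v e i + L i (e i) - g *\<^sub>R orth_proj (V i) (e i - (\<Sum>j<m. S i j *\<^sub>R e j))))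
    \<le> - lam * (\<Sum>i<m. (norm (w i))\<^sup>2) + (aA\<^sup>2 / 2 + (real m)\<^sup>2 * g\<^sup>2 / 2) * (\<Sum>i<m. (norm (u i))\<^sup>2)"
proof -
  define W2 where "W2 = (\<Sum>i<m. (norm (w i))\<^sup>2)"
  define U2 where "U2 = (\<Sum>i<m. (norm (u i))\<^sup>2)"
  have ewu: "e i = w i + u i" for i unfolding w_def u_def by simp
  have wV: "w i \<in> V i" if "i < m" for i unfolding w_def using sub[OF that] by (rule orth_proj_in)
  have wd: "w i \<bullet> orth_proj (V i) (A *v e i + L i (e i) - g *\<^sub>R orth_proj (V i) (e i - (\<Sum>j<m. S i j *\<^sub>R e j)))
      = w i \<bullet> (A *v e i) - g * ((norm (w i))\<^sup>2 - (\<Sum>j<m. S i j * (w i \<bullet> w j)))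
        + g * (\<Sum>j<m. S i j * (w i \<bullet> u j))" if i: "i < m" for i
  proof -
    have "u i \<bullet> w i = 0" unfolding u_def using orth_proj_orthogonal[OF sub[OF i] wV[OF i]] .
    then have "w i \<bullet> e i = (norm (w i))\<^sup>2"
      unfolding ewu[of i] by (simp add: inner_add_right power2_norm_eq_inner inner_commute)
    moreover have "w i \<bullet> (\<Sum>j<m. S i j *\<^sub>R e j)
        = (\<Sum>j<m. S i j * (w i \<bullet> w j)) + (\<Sum>j<m. S i j * (w i \<bullet> u j))"
      by (simp add: inner_sum_right ewu inner_add_right sum.distrib algebra_simps)
    ultimately show ?thesis
      using observer_error_unobservable_part[where V = "V i" and L = "L i" and A = A and e = "e i"
          and g = g and r = "e i - (\<Sum>j<m. S i j *\<^sub>R e j)", OF sub[OF i] L_orth[OF i]]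
      unfolding w_def
      by (simp add: inner_diff_right algebra_simps)
  qed
  have A_part: "w i \<bullet> (A *v e i) \<le> (aA + 1/2) * (norm (w i))\<^sup>2 + aA\<^sup>2/2 * (norm (u i))\<^sup>2" for i
    unfolding ewu[of i] using aA by (rule inner_mult_vec_le)
  have "(\<Sum>i<m. g * (\<Sum>j<m. S i j * (w i \<bullet> u j)))
      \<le> (\<Sum>i<m. (norm (w i))\<^sup>2 / 2 + real m * g\<^sup>2 / 2 * U2)"
    unfolding U2_def using m g(1) S by (intro sum_mono weighted_inner_sum_le) auto
  also have "\<dots> = W2 / 2 + (real m)\<^sup>2 * g\<^sup>2 / 2 * U2"
    unfolding W2_def by (simp add: sum.distrib sum_divide_distrib power2_eq_square)
  finally have coupling_sum: "(\<Sum>i<m. g * (\<Sum>j<m. S i j * (w i \<bullet> u j))) \<le> W2 / 2 + (real m)\<^sup>2 * g\<^sup>2 / 2 * U2" .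
  have consw: "g * (\<beta> * W2) \<le> g * (W2 - (\<Sum>i<m. \<Sum>j<m. S i j * (w i \<bullet> w j)))"
    unfolding W2_def using cons[of w] wV g(1) by (intro mult_left_mono) auto
  have "(\<Sum>i<m. w i \<bullet> orth_proj (V i) (A *v e i + L i (e i) - g *\<^sub>R orth_proj (V i) (e i - (\<Sum>j<m. S i j *\<^sub>R e j))))
      = (\<Sum>i<m. w i \<bullet> (A *v e i)) - g * (W2 - (\<Sum>i<m. \<Sum>j<m. S i j * (w i \<bullet> w j)))
        + (\<Sum>i<m. g * (\<Sum>j<m. S i j * (w i \<bullet> u j)))"
    unfolding W2_def
    by (simp add: wd sum.distrib sum_subtractf sum_distrib_left[symmetric] right_diff_distrib[symmetric])
  also have "\<dots> \<le> ((aA + 1/2) * W2 + aA\<^sup>2/2 * U2) - g * (\<beta> * W2) + (W2 / 2 + (real m)\<^sup>2 * g\<^sup>2 / 2 * U2)"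
  proof -
    have "(\<Sum>i<m. w i \<bullet> (A *v e i)) \<le> (\<Sum>i<m. (aA + 1/2) * (norm (w i))\<^sup>2 + aA\<^sup>2/2 * (norm (u i))\<^sup>2)"
      using A_part by (intro sum_mono) auto
    also have "\<dots> = (aA + 1/2) * W2 + aA\<^sup>2/2 * U2"
      unfolding W2_def U2_def by (simp add: sum.distrib sum_distrib_left)
    finally show ?thesis using consw coupling_sum by linarith
  qed
  also have "\<dots> \<le> - lam * W2 + (aA\<^sup>2 / 2 + (real m)\<^sup>2 * g\<^sup>2 / 2) * U2"
  proof -
    have "W2 \<ge> 0" unfolding W2_def by (simp add: sum_nonneg)
    then have "(aA + 1 - g * \<beta>) * W2 \<le> - lam * W2" using g(2) by (intro mult_right_mono) auto
    then show ?thesis by (simp add: algebra_simps)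
  qed
  finally show ?thesis unfolding W2_def U2_def .
qed

text \<open>The component of the error in the unobservable subspace \<open>V\<^sub>i\<close> is measured by the
  Euclidean norm, where the consensus term acts; the remainder by the local Lyapunov form \<open>B\<^sub>i\<close>.\<close>
definition observer_lyap ::
    "nat \<Rightarrow> (nat \<Rightarrow> (real^'n) set) \<Rightarrow> (nat \<Rightarrow> real^'n \<Rightarrow> real^'n \<Rightarrow> real) \<Rightarrow> real \<Rightarrow> (nat \<Rightarrow> real^'n) \<Rightarrow> real" where
  "observer_lyap m V B \<rho> e = (\<Sum>i<m. (norm (orth_proj (V i) (e i)))\<^sup>2
     + \<rho> * B i (e i - orth_proj (V i) (e i)) (e i - orth_proj (V i) (e i)))"

definition observer_lyap_deriv ::
    "nat \<Rightarrow> (nat \<Rightarrow> (real^'n) set) \<Rightarrow> (nat \<Rightarrow> real^'n \<Rightarrow> real^'n \<Rightarrow> real) \<Rightarrow> real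
      \<Rightarrow> (nat \<Rightarrow> real^'n) \<Rightarrow> (nat \<Rightarrow> real^'n) \<Rightarrow> real" where
  "observer_lyap_deriv m V B \<rho> e d = (\<Sum>i<m. 2 * (orth_proj (V i) (e i) \<bullet> orth_proj (V i) (d i))
     + 2 * \<rho> * B i (e i - orth_proj (V i) (e i)) (d i - orth_proj (V i) (d i)))"

lemma observer_lyap_deriv_le:
  fixes A :: "real^'n^'n" and e :: "nat \<Rightarrow> real^'n" and V :: "nat \<Rightarrow> (real^'n) set"
    and L :: "nat \<Rightarrow> real^'n \<Rightarrow> real^'n" and B :: "nat \<Rightarrow> real^'n \<Rightarrow> real^'n \<Rightarrow> real"
    and S :: "nat \<Rightarrow> nat \<Rightarrow> real"
  assumes m: "m > 0" and sub: "\<And>i. i < m \<Longrightarrow> subspace (V i)"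
    and AV: "\<And>i v. i < m \<Longrightarrow> v \<in> V i \<Longrightarrow> A *v v \<in> V i"
    and linL: "\<And>i. i < m \<Longrightarrow> linear (L i)"
    and LV: "\<And>i v. i < m \<Longrightarrow> v \<in> V i \<Longrightarrow> L i v = 0"
    and L_orth: "\<And>i y v. i < m \<Longrightarrow> v \<in> V i \<Longrightarrow> L i y \<bullet> v = 0"
    and aA: "\<And>y. norm (A *v y) \<le> aA * norm y" "aA \<ge> 0"
    and B_ge: "\<And>i y. i < m \<Longrightarrow> (\<forall>v\<in>V i. y \<bullet> v = 0) \<Longrightarrow> \<alpha> * (norm y)\<^sup>2 \<le> B i y y"
    and B_dec: "\<And>i y. i < m \<Longrightarrow> (\<forall>v\<in>V i. y \<bullet> v = 0) \<Longrightarrow>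
      B i y ((A *v y - orth_proj (V i) (A *v y)) + L i y) \<le> - (lam + 1) * B i y y"
    and cons: "\<And>w. (\<forall>i<m. w i \<in> V i) \<Longrightarrow>
      \<beta> * (\<Sum>i<m. (norm (w i))\<^sup>2) \<le> (\<Sum>i<m. (norm (w i))\<^sup>2) - (\<Sum>i<m. \<Sum>j<m. S i j * (w i \<bullet> w j))"
    and S: "\<And>i j. 0 \<le> S i j" "\<And>i j. S i j \<le> 1"
    and g: "g \<ge> 0" "g * \<beta> \<ge> aA + 1 + lam"
    and \<rho>: "\<rho> > 0" "\<rho> * \<alpha> \<ge> aA\<^sup>2 / 2 + (real m)\<^sup>2 * g\<^sup>2 / 2"
  defines "d \<equiv> \<lambda>i. A *v e i + L i (e i) - g *\<^sub>R orth_proj (V i) (e i - (\<Sum>j<m. S i j *\<^sub>R e j))"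
  shows "observer_lyap_deriv m V B \<rho> e d \<le> - 2 * lam * observer_lyap m V B \<rho> e"
proof -
  define w where "w i = orth_proj (V i) (e i)" for i
  define u where "u i = e i - orth_proj (V i) (e i)" for i
  define W2 where "W2 = (\<Sum>i<m. (norm (w i))\<^sup>2)"
  define U2 where "U2 = (\<Sum>i<m. (norm (u i))\<^sup>2)"
  define BU where "BU = (\<Sum>i<m. B i (u i) (u i))"
  have u_orth: "\<forall>v\<in>V i. u i \<bullet> v = 0" if "i < m" for i
    unfolding u_def using orth_proj_orthogonal[OF sub[OF that]] by blast
  have "B i (u i) (d i - orth_proj (V i) (d i)) \<le> - (lam + 1) * B i (u i) (u i)" if i: "i < m" for i
    using B_dec[OF i u_orth[OF i]] unfolding u_def d_def
    by (simp only: observer_error_observable_part[OF sub[OF i] AV[OF i] linL[OF i] LV[OF i] L_orth[OF i]])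
  then have obs_part: "(\<Sum>i<m. B i (u i) (d i - orth_proj (V i) (d i))) \<le> - (lam + 1) * BU"
    unfolding BU_def sum_distrib_left by (intro sum_mono) auto
  have unobs_part: "(\<Sum>i<m. w i \<bullet> orth_proj (V i) (d i)) \<le> - lam * W2 + (aA\<^sup>2 / 2 + (real m)\<^sup>2 * g\<^sup>2 / 2) * U2"
    unfolding d_def w_def W2_def U2_def u_def
    using observer_error_unobservable_estimate[OF m sub L_orth aA cons S g] .
  have BU: "\<alpha> * U2 \<le> BU" unfolding U2_def BU_def sum_distrib_left using B_ge u_orth by (intro sum_mono) auto
  have "observer_lyap_deriv m V B \<rho> e d
      = 2 * (\<Sum>i<m. w i \<bullet> orth_proj (V i) (d i)) + 2 * \<rho> * (\<Sum>i<m. B i (u i) (d i - orth_proj (V i) (d i)))"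
    unfolding observer_lyap_deriv_def w_def u_def by (simp add: sum.distrib sum_distrib_left)
  also have "\<dots> \<le> 2 * (- lam * W2 + (aA\<^sup>2 / 2 + (real m)\<^sup>2 * g\<^sup>2 / 2) * U2) + 2 * \<rho> * (- (lam + 1) * BU)"
    using unobs_part obs_part \<rho>(1) by (intro add_mono mult_left_mono) auto
  also have "\<dots> \<le> - 2 * lam * (W2 + \<rho> * BU)"
  proof -
    have "(aA\<^sup>2 / 2 + (real m)\<^sup>2 * g\<^sup>2 / 2) * U2 \<le> \<rho> * \<alpha> * U2"
      using \<rho>(2) by (rule mult_right_mono) (simp add: U2_def sum_nonneg)
    also have "\<dots> \<le> \<rho> * BU" using BU \<rho>(1) by (simp add: mult.assoc mult_left_mono)
    finally show ?thesis by (simp add: algebra_simps)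
  qed
  also have "W2 + \<rho> * BU = observer_lyap m V B \<rho> e"
    unfolding observer_lyap_def W2_def BU_def w_def u_def by (simp add: sum.distrib sum_distrib_left)
  finally show ?thesis .
qed

lemma observer_lyap_bounds:
  fixes V :: "nat \<Rightarrow> (real^'n) set" and B :: "nat \<Rightarrow> real^'n \<Rightarrow> real^'n \<Rightarrow> real"
  assumes sub: "\<And>i. i < m \<Longrightarrow> subspace (V i)" and bil: "\<And>i. i < m \<Longrightarrow> bilinear (B i)"
    and B_ge: "\<And>i y. i < m \<Longrightarrow> (\<forall>v\<in>V i. y \<bullet> v = 0) \<Longrightarrow> \<alpha> * (norm y)\<^sup>2 \<le> B i y y"
    and \<alpha>: "\<alpha> > 0" and \<rho>: "\<rho> > 0"
  shows "\<exists>lo hi. lo > 0 \<and> hi > 0 \<and>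
    (\<forall>e. lo * (\<Sum>i<m. (norm (e i))\<^sup>2) \<le> observer_lyap m V B \<rho> e) \<and>
    (\<forall>e. observer_lyap m V B \<rho> e \<le> hi * (\<Sum>i<m. (norm (e i))\<^sup>2))"
proof -
  have "\<forall>i. \<exists>k>0. i < m \<longrightarrow> (\<forall>a b. norm (B i a b) \<le> norm a * norm b * k)"
    using bil bounded_bilinear.pos_bounded bilinear_conv_bounded_bilinear by (metis zero_less_one)
  then obtain k where k: "\<And>i. k i > 0" "\<And>i a b. i < m \<Longrightarrow> norm (B i a b) \<le> norm a * norm b * k i"
    by metis
  define K where "K = (\<Sum>i<m. k i)"
  have k_le: "k i \<le> K" if "i < m" for i
    unfolding K_def using that k(1) by (intro member_le_sum) (auto intro: less_imp_le)
  have K: "K \<ge> 0" unfolding K_def using k(1) by (simp add: sum_nonneg less_imp_le)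
  define lo where "lo = min 1 (\<rho> * \<alpha>)"
  define hi where "hi = 1 + \<rho> * K"
  have term_bounds: "lo * (norm y)\<^sup>2 \<le> (norm (orth_proj (V i) y))\<^sup>2
      + \<rho> * B i (y - orth_proj (V i) y) (y - orth_proj (V i) y)
    \<and> (norm (orth_proj (V i) y))\<^sup>2 + \<rho> * B i (y - orth_proj (V i) y) (y - orth_proj (V i) y)
      \<le> hi * (norm y)\<^sup>2" if i: "i < m" for i y
  proof -
    define p where "p = orth_proj (V i) y"
    define q where "q = y - p"
    have py: "(norm y)\<^sup>2 = (norm p)\<^sup>2 + (norm q)\<^sup>2"
      unfolding p_def q_def by (rule norm_orth_proj_pythagoras[OF sub[OF i]])
    have "\<forall>v\<in>V i. q \<bullet> v = 0" unfolding q_def p_def using orth_proj_orthogonal[OF sub[OF i]] by blast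
    then have "\<rho> * \<alpha> * (norm q)\<^sup>2 \<le> \<rho> * B i q q" using B_ge[OF i] \<rho> by (simp add: mult.assoc)
    moreover have "lo * (norm q)\<^sup>2 \<le> \<rho> * \<alpha> * (norm q)\<^sup>2"
      unfolding lo_def by (intro mult_right_mono) simp_all
    moreover have "lo * (norm p)\<^sup>2 \<le> 1 * (norm p)\<^sup>2"
      unfolding lo_def by (intro mult_right_mono) simp_all
    moreover have "\<rho> * B i q q \<le> \<rho> * K * (norm q)\<^sup>2"
    proof -
      have "B i q q \<le> (norm q)\<^sup>2 * k i"
        using k(2)[OF i, of q q] by (simp add: power2_eq_square)
      also have "\<dots> \<le> (norm q)\<^sup>2 * K" using k_le[OF i] by (rule mult_left_mono) simp
      finally show ?thesis using \<rho> by (simp add: mult.commute mult.left_commute)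
    qed
    moreover have "0 \<le> \<rho> * K * (norm p)\<^sup>2" using \<rho> K by simp
    moreover have "hi * ((norm p)\<^sup>2 + (norm q)\<^sup>2)
        = (norm p)\<^sup>2 + (norm q)\<^sup>2 + \<rho> * K * (norm p)\<^sup>2 + \<rho> * K * (norm q)\<^sup>2"
      unfolding hi_def by (simp add: algebra_simps)
    moreover have "lo * ((norm p)\<^sup>2 + (norm q)\<^sup>2) = lo * (norm p)\<^sup>2 + lo * (norm q)\<^sup>2"
      by (simp add: algebra_simps)
    ultimately show ?thesis unfolding p_def[symmetric] q_def[symmetric] py
      using zero_le_power2[of "norm q"] by linarith
  qed
  show ?thesis
  proof (rule exI[of _ lo], rule exI[of _ hi], intro conjI allI)
    show "lo > 0" unfolding lo_def using \<rho> \<alpha> by auto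
    show "hi > 0" unfolding hi_def using \<rho> K by (simp add: add_pos_nonneg)
    fix e :: "nat \<Rightarrow> real^'n"
    show "lo * (\<Sum>i<m. (norm (e i))\<^sup>2) \<le> observer_lyap m V B \<rho> e"
      unfolding observer_lyap_def sum_distrib_left using term_bounds by (intro sum_mono) auto
    show "observer_lyap m V B \<rho> e \<le> hi * (\<Sum>i<m. (norm (e i))\<^sup>2)"
      unfolding observer_lyap_def sum_distrib_left using term_bounds by (intro sum_mono) auto
  qed
qed

lemma nonpos_right_derivative_imp_le:
  fixes f f' :: "real \<Rightarrow> real"
  assumes cont: "continuous_on {0..} f"
    and der: "\<And>t. t \<ge> 0 \<Longrightarrow> (f has_real_derivative f' t) (at t within {t..})"
    and neg: "\<And>t. t \<ge> 0 \<Longrightarrow> f' t \<le> 0"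
    and T: "T \<ge> 0"
  shows "f T \<le> f 0"
proof (rule ccontr)
  assume "\<not> f T \<le> f 0"
  then have gt: "f T > f 0" by simp
  then have Tp: "T > 0" using T by (cases "T = 0") auto
  define \<epsilon> where "\<epsilon> = (f T - f 0) / (2 * T)"
  have \<epsilon>: "\<epsilon> > 0" unfolding \<epsilon>_def using gt Tp by simp
  define h where "h = (\<lambda>t. f t - f 0 - \<epsilon> * t)"
  have hT: "h T > 0" unfolding h_def \<epsilon>_def using gt Tp by (simp add: field_simps)
  define S where "S = {t\<in>{0..T}. h t \<le> 0}"
  have contT: "continuous_on {0..T} h" unfolding h_def
    by (intro continuous_intros continuous_on_subset[OF cont]) auto
  have cS: "closed S"
  proof -
    have "S = {0..T} \<inter> h -` {..0}" unfolding S_def by auto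
    then show ?thesis using continuous_closed_preimage[OF contT closed_atLeastAtMost closed_atMost] by simp
  qed
  have S0: "0 \<in> S" unfolding S_def h_def using T by simp
  have bS: "bdd_above S" unfolding S_def by (rule bdd_aboveI[of _ T]) auto
  define s where "s = Sup S"
  have sS: "s \<in> S" unfolding s_def using closed_contains_Sup[OF _ bS cS] S0 by blast
  then have s: "0 \<le> s" "s \<le> T" "h s \<le> 0" unfolding S_def by auto
  have sT: "s < T" using s hT by (cases "s = T") auto
  have "((\<lambda>t. f t - f 0 - \<epsilon> * t) has_real_derivative (f' s - 0 - \<epsilon> * 1)) (at s within {s..})"
    by (intro derivative_intros der s) (use DERIV_cmult_Id in simp)
  then have dh: "(h has_real_derivative (f' s - \<epsilon>)) (at s within {s..})" unfolding h_def by simp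
  have "f' s - \<epsilon> < 0" using neg[OF s(1)] \<epsilon> by simp
  from has_real_derivative_neg_dec_right[OF dh this]
  obtain d where d: "d > 0" "\<And>\<delta>. \<delta> > 0 \<Longrightarrow> s + \<delta> \<in> {s..} \<Longrightarrow> \<delta> < d \<Longrightarrow> h (s + \<delta>) < h s" by blast
  define \<delta> where "\<delta> = min (d / 2) (T - s)"
  have \<delta>: "\<delta> > 0" "\<delta> < d" "s + \<delta> \<le> T" unfolding \<delta>_def using d sT by auto
  have "h (s + \<delta>) < h s" using d(2)[OF \<delta>(1) _ \<delta>(2)] \<delta>(1) by simp
  then have "s + \<delta> \<in> S" unfolding S_def using s \<delta> by auto
  then have "s + \<delta> \<le> s" unfolding s_def using bS by (rule cSup_upper)
  then show False using \<delta> by simp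
qed



lemma le_sqrt_mult_of_sq_le:
  fixes a b c lo hi :: real
  assumes lo: "lo > 0" and hi: "hi \<ge> 0" and b: "b \<ge> 0" and c: "c \<ge> 0"
    and le: "lo * a\<^sup>2 \<le> c\<^sup>2 * (hi * b\<^sup>2)"
  shows "a \<le> sqrt (hi / lo) * c * b"
proof (rule power2_le_imp_le)
  have "a\<^sup>2 \<le> c\<^sup>2 * (hi * b\<^sup>2) / lo" using le lo by (simp add: pos_le_divide_eq mult.commute)
  also have "\<dots> = (sqrt (hi / lo) * c * b)\<^sup>2" using lo hi by (simp add: power_mult_distrib)
  finally show "a\<^sup>2 \<le> (sqrt (hi / lo) * c * b)\<^sup>2" .
  show "0 \<le> sqrt (hi / lo) * c * b" using lo hi b c by simp
qed

lemma exp_decay_of_right_derivative: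
  fixes W W' :: "real \<Rightarrow> real"
  assumes cont: "continuous_on {0..} W"
    and der: "\<And>t. t \<ge> 0 \<Longrightarrow> (W has_real_derivative W' t) (at t within {t..})"
    and dec: "\<And>t. t \<ge> 0 \<Longrightarrow> W' t \<le> - r * W t" and t: "t \<ge> 0"
  shows "W t \<le> exp (- r * t) * W 0"
proof -
  define f where "f t = exp (r * t) * W t" for t
  define f' where "f' t = exp (r * t) * (r * W t + W' t)" for t
  have "(f has_real_derivative f' \<tau>) (at \<tau> within {\<tau>..})" if "\<tau> \<ge> 0" for \<tau>
  proof -
    have "((\<lambda>t. exp (r * t)) has_real_derivative exp (r * \<tau>) * r) (at \<tau> within {\<tau>..})"
      by (auto intro!: derivative_eq_intros)
    from DERIV_mult[OF this der[OF that]] show ?thesis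
      unfolding f_def[abs_def] f'_def by (simp add: algebra_simps)
  qed
  moreover have "f' \<tau> \<le> 0" if "\<tau> \<ge> 0" for \<tau>
    unfolding f'_def using dec[OF that] by (simp add: mult_nonneg_nonpos)
  moreover have "continuous_on {0..} f" unfolding f_def[abs_def] by (intro continuous_intros cont)
  ultimately have "f t \<le> f 0" using t by (blast intro: nonpos_right_derivative_imp_le)
  then have "exp (- r * t) * f t \<le> exp (- r * t) * W 0" unfolding f_def by simp
  then show ?thesis unfolding f_def by (simp add: exp_minus field_simps)
qed

lemma observer_lyap_has_real_derivative:
  fixes e :: "nat \<Rightarrow> real \<Rightarrow> real^'n" and d :: "nat \<Rightarrow> real^'n"
  assumes sub: "\<And>i. i < m \<Longrightarrow> subspace (V i)" and bil: "\<And>i. i < m \<Longrightarrow> bilinear (B i)"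
    and sym: "\<And>i x y. i < m \<Longrightarrow> B i x y = B i y x"
    and de: "\<And>i. i < m \<Longrightarrow> (e i has_vector_derivative d i) (at t within T)"
  shows "((\<lambda>t. observer_lyap m V B \<rho> (\<lambda>i. e i t)) has_real_derivative
    observer_lyap_deriv m V B \<rho> (\<lambda>i. e i t) d) (at t within T)"
proof -
  have "((\<lambda>t. (norm (orth_proj (V i) (e i t)))\<^sup>2
      + \<rho> * B i (e i t - orth_proj (V i) (e i t)) (e i t - orth_proj (V i) (e i t))) has_vector_derivative
      2 * (orth_proj (V i) (e i t) \<bullet> orth_proj (V i) (d i))
      + 2 * \<rho> * B i (e i t - orth_proj (V i) (e i t)) (d i - orth_proj (V i) (d i))) (at t within T)"
    if i: "i \<in> {..<m}" for i
  proof -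
    let ?P = "orth_proj (V i)"
    have blP: "bounded_linear ?P" using linear_orth_proj[OF sub] i linear_conv_bounded_linear by auto
    have bbB: "bounded_bilinear (B i)" using bil i bilinear_conv_bounded_bilinear by auto
    have dP: "((\<lambda>t. ?P (e i t)) has_vector_derivative ?P (d i)) (at t within T)"
      using bounded_linear.has_vector_derivative[OF blP de] i by simp
    have dQ: "((\<lambda>t. e i t - ?P (e i t)) has_vector_derivative d i - ?P (d i)) (at t within T)"
      using de i dP by (intro has_vector_derivative_diff) auto
    note d1 = bounded_bilinear.has_vector_derivative[OF bounded_bilinear_inner dP dP]
    note d2 = has_vector_derivative_mult[OF has_vector_derivative_const
        bounded_bilinear.has_vector_derivative[OF bbB dQ dQ], of \<rho>]
    have "B i (d i - ?P (d i)) (e i t - ?P (e i t)) = B i (e i t - ?P (e i t)) (d i - ?P (d i))"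
      using sym i by blast
    then show ?thesis using has_vector_derivative_add[OF d1 d2]
      by (simp add: power2_norm_eq_inner inner_commute algebra_simps)
  qed
  then have "((\<lambda>t. observer_lyap m V B \<rho> (\<lambda>i. e i t)) has_vector_derivative
      observer_lyap_deriv m V B \<rho> (\<lambda>i. e i t) d) (at t within T)"
    unfolding observer_lyap_def observer_lyap_deriv_def by (rule has_vector_derivative_sum)
  then show ?thesis by (simp add: has_real_derivative_iff_has_vector_derivative)
qed

lemma continuous_on_observer_lyap:
  fixes e :: "nat \<Rightarrow> real \<Rightarrow> real^'n"
  assumes sub: "\<And>i. i < m \<Longrightarrow> subspace (V i)" and bil: "\<And>i. i < m \<Longrightarrow> bilinear (B i)"
    and cont: "\<And>i. i < m \<Longrightarrow> continuous_on T (e i)"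
  shows "continuous_on T (\<lambda>t. observer_lyap m V B \<rho> (\<lambda>i. e i t))"
  unfolding observer_lyap_def
proof (intro continuous_on_sum)
  fix i assume i: "i \<in> {..<m}"
  have cP: "continuous_on T (\<lambda>t. orth_proj (V i) (e i t))"
    using linear_continuous_on_compose[OF cont linear_orth_proj[OF sub]] i by auto
  have cQ: "continuous_on T (\<lambda>t. e i t - orth_proj (V i) (e i t))"
    using continuous_on_diff[OF cont cP] i by auto
  have "bounded_bilinear (B i)" using bil i bilinear_conv_bounded_bilinear by auto
  from bounded_bilinear.continuous_on[OF this cQ cQ]
  show "continuous_on T (\<lambda>t. (norm (orth_proj (V i) (e i t)))\<^sup>2
      + \<rho> * B i (e i t - orth_proj (V i) (e i t)) (e i t - orth_proj (V i) (e i t)))"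
    by (intro continuous_intros cP)
qed

section \<open>The distributed observer\<close>

lemma neighbour_average_shift:
  fixes y :: "nat \<Rightarrow> real^'n"
  assumes fin: "finite N" and N: "N \<subseteq> {..<m}" and c: "card N > 0"
  shows "y i - (1 / real (card N)) *\<^sub>R (\<Sum>j\<in>N. y j)
       = (y i - z) - (\<Sum>j<m. (if j \<in> N then 1 / real (card N) else 0) *\<^sub>R (y j - z))"
proof -
  have "(\<Sum>j<m. (if j \<in> N then 1 / real (card N) else 0) *\<^sub>R (y j - z))
      = (\<Sum>j\<in>{..<m} \<inter> N. (1 / real (card N)) *\<^sub>R (y j - z))"
    by (simp add: sum.inter_restrict if_distrib[of "\<lambda>a. a *\<^sub>R _"] cong: if_cong)
  also have "{..<m} \<inter> N = N" using N by blast
  also have "(\<Sum>j\<in>N. (1 / real (card N)) *\<^sub>R (y j - z)) = (1 / real (card N)) *\<^sub>R (\<Sum>j\<in>N. y j) - z"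
    using c by (simp add: scaleR_sum_right[symmetric] sum_subtractf scaleR_diff_right sum_constant_scaleR
        del: sum_constant)
  finally show ?thesis by simp
qed

lemma observer_rhs_error:
  fixes A :: "real^'n^'n" and F :: "nat \<Rightarrow> real^'n \<Rightarrow> real^'n"
  assumes linF: "linear (F i)" and self_loop: "E (\<sigma> t) i i" and i: "i < m"
  shows "observer_rhs A C (\<lambda>i k. F i (C i k)) s E m g \<sigma> x xs i t - A *v x t
    = A *v (xs i t - x t) + F i (out_gram C s i (xs i t - x t))
      - g *\<^sub>R orth_proj (unobs A C s i) ((xs i t - x t) - (\<Sum>j<m. Smat E m (\<sigma> t) i j *\<^sub>R (xs j t - x t)))"
proof -
  define N where "N = nbrs E m (\<sigma> t) i"
  have fin: "finite N" and N: "N \<subseteq> {..<m}" unfolding N_def nbrs_def by auto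
  have "i \<in> N" unfolding N_def nbrs_def using self_loop i by simp
  then have "card N > 0" using fin card_gt_0_iff by blast
  from neighbour_average_shift[OF fin N this, of "\<lambda>j. xs j t" i "x t"]
  have avg: "xs i t - (1 / real (card N)) *\<^sub>R (\<Sum>j\<in>N. xs j t)
      = (xs i t - x t) - (\<Sum>j<m. Smat E m (\<sigma> t) i j *\<^sub>R (xs j t - x t))"
    unfolding Smat_def N_def .
  have "gain_map (\<lambda>i k. F i (C i k)) s i (out_map C s i (xs i t))
      - gain_map (\<lambda>i k. F i (C i k)) s i (out_map C s i (x t)) = F i (out_gram C s i (xs i t - x t))"
    using linF linear_out_gram[of C s i] by (simp add: gain_map_out_map linear_diff)
  then show ?thesis unfolding observer_rhs_def N_def[symmetric] avg
    by (simp add: matrix_vector_right_distrib algebra_simps)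
qed

locale local_observers =
  fixes A :: "real^'n^'n" and C :: "nat \<Rightarrow> nat \<Rightarrow> real^'n" and s :: "nat \<Rightarrow> nat" and m :: nat
    and F :: "nat \<Rightarrow> real^'n \<Rightarrow> real^'n" and B :: "nat \<Rightarrow> real^'n \<Rightarrow> real^'n \<Rightarrow> real"
    and \<alpha> \<mu> :: real
  assumes \<alpha>: "\<alpha> > 0" and linF: "\<And>i. linear (F i)"
    and F_orth: "\<And>i y v. v \<in> unobs A C s i \<Longrightarrow> F i y \<bullet> v = 0"
    and bil: "\<And>i. bilinear (B i)" and sym: "\<And>i x y. B i x y = B i y x"
    and B_ge: "\<And>i y. i < m \<Longrightarrow> (\<forall>v\<in>unobs A C s i. y \<bullet> v = 0) \<Longrightarrow> \<alpha> * (norm y)\<^sup>2 \<le> B i y y"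
    and B_dec: "\<And>i y. (\<forall>v\<in>unobs A C s i. y \<bullet> v = 0) \<Longrightarrow>
      B i y ((A *v y - orth_proj (unobs A C s i) (A *v y)) + F i (out_gram C s i y)) \<le> - \<mu> * B i y y"

lemma local_observers_exist:
  fixes A :: "real^'n^'n" and C :: "nat \<Rightarrow> nat \<Rightarrow> real^'n" and s :: "nat \<Rightarrow> nat"
  shows "\<exists>F B \<alpha>. local_observers A C s m F B \<alpha> \<mu>"
proof -
  define X where "X i = {x. \<forall>v\<in>unobs A C s i. x \<bullet> v = 0}" for i
  define M0 where "M0 i x = A *v x - orth_proj (unobs A C s i) (A *v x)" for i x
  define Q where "Q i F B \<alpha> \<longleftrightarrow> linear F \<and> (\<forall>y. F y \<in> X i) \<and>
      quadratic_lyapunov (X i) (\<lambda>x. M0 i x + F (out_gram C s i x)) \<mu> B \<alpha>" for i F B \<alpha>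
  have "\<exists>F B \<alpha>. Q i F B \<alpha>" for i
    unfolding Q_def
  proof (rule observable_output_injection_lyapunov[where A = "M0 i" and C = "out_gram C s i"])
    show "subspace (X i)" unfolding X_def subspace_def by (auto simp: inner_add_left)
    show "linear (M0 i)"
      using linear_compose[OF matrix_vector_mul_linear linear_orth_proj[OF subspace_unobs]]
      unfolding M0_def[abs_def] by (intro linear_compose_sub matrix_vector_mul_linear) (simp add: o_def)
    show "\<forall>x\<in>X i. M0 i x \<in> X i"
      unfolding X_def M0_def using orth_proj_orthogonal[OF subspace_unobs] by blast
    show "linear (out_gram C s i)" by (rule linear_out_gram)
    show "observable_on (X i) (M0 i) (out_gram C s i)"
      unfolding X_def M0_def[abs_def] by (rule observable_on_orth_unobs)
  qed
  then obtain F B \<alpha>i where "\<And>i. Q i (F i) (B i) (\<alpha>i i)" by metis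
  then have F: "\<And>i. linear (F i)" "\<And>i y. F i y \<in> X i"
    and lyap: "\<And>i. quadratic_lyapunov (X i)
      (\<lambda>x. (A *v x - orth_proj (unobs A C s i) (A *v x)) + F i (out_gram C s i x)) \<mu> (B i) (\<alpha>i i)"
    unfolding Q_def M0_def by auto
  define \<alpha> where "\<alpha> = Min (insert 1 (\<alpha>i ` {..<m}))"
  have \<alpha>i_pos: "\<alpha>i i > 0" for i using lyap[of i] unfolding quadratic_lyapunov_def by blast
  have "local_observers A C s m F B \<alpha> \<mu>"
  proof (rule local_observers.intro)
    show "\<alpha> > 0" unfolding \<alpha>_def using \<alpha>i_pos by (subst Min_gr_iff) auto
    show "linear (F i)" for i by (rule F(1))
    show "F i y \<bullet> v = 0" if "v \<in> unobs A C s i" for i y v using F(2) that unfolding X_def by blast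
    show "bilinear (B i)" "B i x y = B i y x" for i x y using lyap[of i] unfolding quadratic_lyapunov_def by auto
    show "\<alpha> * (norm y)\<^sup>2 \<le> B i y y" if "i < m" "\<forall>v\<in>unobs A C s i. y \<bullet> v = 0" for i y
    proof -
      have "\<alpha> \<le> \<alpha>i i" unfolding \<alpha>_def using that(1) by (intro Min_le) auto
      then have "\<alpha> * (norm y)\<^sup>2 \<le> \<alpha>i i * (norm y)\<^sup>2" by (rule mult_right_mono) simp
      also have "\<dots> \<le> B i y y" using lyap[of i] that(2) unfolding quadratic_lyapunov_def X_def by blast
      finally show ?thesis .
    qed
    show "B i y ((A *v y - orth_proj (unobs A C s i) (A *v y)) + F i (out_gram C s i y)) \<le> - \<mu> * B i y y"
      if "\<forall>v\<in>unobs A C s i. y \<bullet> v = 0" for i y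
      using lyap[of i] that unfolding quadratic_lyapunov_def X_def by blast
  qed
  then show ?thesis by blast
qed

lemma observer_error_has_derivative:
  fixes A :: "real^'n^'n" and F :: "nat \<Rightarrow> real^'n \<Rightarrow> real^'n"
  assumes x: "solves_ode x (\<lambda>t. A *v x t)"
    and xs: "solves_ode (xs i) (observer_rhs A C (\<lambda>i k. F i (C i k)) s E m g \<sigma> x xs i)"
    and linF: "linear (F i)" and self_loop: "E (\<sigma> t) i i" and i: "i < m" and t: "t \<ge> 0"
  shows "((\<lambda>t. xs i t - x t) has_vector_derivative
      A *v (xs i t - x t) + F i (out_gram C s i (xs i t - x t))
      - g *\<^sub>R orth_proj (unobs A C s i) ((xs i t - x t) - (\<Sum>j<m. Smat E m (\<sigma> t) i j *\<^sub>R (xs j t - x t))))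
    (at t within {t..})"
proof -
  have "(xs i has_vector_derivative observer_rhs A C (\<lambda>i k. F i (C i k)) s E m g \<sigma> x xs i t) (at t within {t..})"
    "(x has_vector_derivative A *v x t) (at t within {t..})"
    using x xs t unfolding solves_ode_def by blast+
  from has_vector_derivative_diff[OF this] show ?thesis
    unfolding observer_rhs_error[where F = F and i = i and \<sigma> = \<sigma> and t = t and E = E and m = m, OF linF self_loop i] .
qed

locale distributed_observer = local_observers A C s m F B \<alpha> "lam + 1"
  for A :: "real^'n^'n" and C s m F B \<alpha> and lam :: real +
  fixes P :: "'p set" and E :: "'p \<Rightarrow> nat \<Rightarrow> nat \<Rightarrow> bool" and \<beta> aA g :: real
  assumes m: "m > 0" and self_loops: "\<forall>p\<in>P. \<forall>i<m. E p i i"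
    and cons: "\<forall>p\<in>P. \<forall>w. (\<forall>i<m. w i \<in> unobs A C s i) \<longrightarrow>
      \<beta> * (\<Sum>i<m. (norm (w i))\<^sup>2) \<le> (\<Sum>i<m. (norm (w i))\<^sup>2) - (\<Sum>i<m. \<Sum>j<m. Smat E m p i j * (w i \<bullet> w j))"
    and aA: "\<And>y. norm (A *v y) \<le> aA * norm y" "aA \<ge> 0"
    and g: "g \<ge> 0" "g * \<beta> \<ge> aA + 1 + lam"
begin

lemma observer_lyap_decay:
  fixes x :: "real \<Rightarrow> real^'n" and xs :: "nat \<Rightarrow> real \<Rightarrow> real^'n"
  assumes \<rho>: "\<rho> > 0" "\<rho> * \<alpha> \<ge> aA\<^sup>2 / 2 + (real m)\<^sup>2 * g\<^sup>2 / 2"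
    and \<sigma>: "switching_signal P \<sigma>" and x: "solves_ode x (\<lambda>t. A *v x t)"
    and xs: "\<forall>i<m. solves_ode (xs i) (observer_rhs A C (\<lambda>i k. F i (C i k)) s E m g \<sigma> x xs i)"
    and t: "t \<ge> 0"
  shows "observer_lyap m (unobs A C s) B \<rho> (\<lambda>i. xs i t - x t)
    \<le> exp (- (2 * lam) * t) * observer_lyap m (unobs A C s) B \<rho> (\<lambda>i. xs i 0 - x 0)"
proof -
  define V where "V = unobs A C s"
  define L where "L i y = F i (out_gram C s i y)" for i y
  define e where "e i t = xs i t - x t" for i t
  define d where "d t i = A *v e i t + L i (e i t)
    - g *\<^sub>R orth_proj (V i) (e i t - (\<Sum>j<m. Smat E m (\<sigma> t) i j *\<^sub>R e j t))" for t i
  have sub: "subspace (V i)" for i unfolding V_def by (rule subspace_unobs)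
  have AV: "A *v v \<in> V i" if "v \<in> V i" for i v using that unobs_invariant unfolding V_def by blast
  have linL: "linear (L i)" for i
    unfolding L_def[abs_def] using linear_compose[OF linear_out_gram linF] by (simp add: o_def)
  have LV: "L i v = 0" if "v \<in> V i" for i v
  proof -
    have "out_gram C s i v = 0" using that unobs_out_map out_gram_eq_0_iff unfolding V_def by blast
    then show ?thesis unfolding L_def using linear_0[OF linF] by simp
  qed
  have L_orth: "L i y \<bullet> v = 0" if "v \<in> V i" for i y v using F_orth that unfolding L_def V_def by blast
  have B_ge': "\<alpha> * (norm y)\<^sup>2 \<le> B i y y" if "i < m" "\<forall>v\<in>V i. y \<bullet> v = 0" for i y
    using B_ge that unfolding V_def by blast
  have B_dec': "B i y ((A *v y - orth_proj (V i) (A *v y)) + L i y) \<le> - (lam + 1) * B i y y"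
    if "\<forall>v\<in>V i. y \<bullet> v = 0" for i y
    using B_dec that unfolding V_def L_def by blast
  have \<sigma>P: "\<sigma> \<tau> \<in> P" if "\<tau> \<ge> 0" for \<tau> using \<sigma> that unfolding switching_signal_def by blast
  have de: "(e i has_vector_derivative d \<tau> i) (at \<tau> within {\<tau>..})" if i: "i < m" and \<tau>: "\<tau> \<ge> 0" for i \<tau>
  proof -
    have "E (\<sigma> \<tau>) i i" using self_loops \<sigma>P[OF \<tau>] i by blast
    moreover have "solves_ode (xs i) (observer_rhs A C (\<lambda>i k. F i (C i k)) s E m g \<sigma> x xs i)"
      using xs i by blast
    ultimately show ?thesis
      using observer_error_has_derivative[where F = F and i = i and E = E and \<sigma> = \<sigma> and t = \<tau>
          and m = m, OF x _ linF _ i \<tau>]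
      unfolding e_def[abs_def] d_def L_def V_def by blast
  qed
  have ce: "continuous_on {0..} (e i)" if "i < m" for i
  proof -
    have "continuous_on {0..} (xs i)" "continuous_on {0..} x"
      using x xs that unfolding solves_ode_def by blast+
    then show ?thesis unfolding e_def[abs_def] by (rule continuous_on_diff)
  qed
  define W where "W \<tau> = observer_lyap m V B \<rho> (\<lambda>i. e i \<tau>)" for \<tau>
  define W' where "W' \<tau> = observer_lyap_deriv m V B \<rho> (\<lambda>i. e i \<tau>) (d \<tau>)" for \<tau>
  have "W t \<le> exp (- (2 * lam) * t) * W 0"
  proof (rule exp_decay_of_right_derivative[where W = W and W' = W' and r = "2 * lam" and t = t])
    show "continuous_on {0..} W"
      unfolding W_def[abs_def] using sub bil ce by (rule continuous_on_observer_lyap)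
    show "(W has_real_derivative W' \<tau>) (at \<tau> within {\<tau>..})" if "\<tau> \<ge> 0" for \<tau>
      unfolding W_def[abs_def] W'_def using sub bil sym de[OF _ that] by (rule observer_lyap_has_real_derivative)
    show "W' \<tau> \<le> - (2 * lam) * W \<tau>" if "\<tau> \<ge> 0" for \<tau>
    proof -
      have cons_\<tau>: "\<beta> * (\<Sum>i<m. (norm (w i))\<^sup>2)
          \<le> (\<Sum>i<m. (norm (w i))\<^sup>2) - (\<Sum>i<m. \<Sum>j<m. Smat E m (\<sigma> \<tau>) i j * (w i \<bullet> w j))"
        if "\<forall>i<m. w i \<in> V i" for w
        using cons \<sigma>P[OF \<open>\<tau> \<ge> 0\<close>] that unfolding V_def by blast
      have "observer_lyap_deriv m V B \<rho> (\<lambda>i. e i \<tau>) (d \<tau>) \<le> - 2 * lam * observer_lyap m V B \<rho> (\<lambda>i. e i \<tau>)"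
        unfolding d_def
        using m sub AV linL LV L_orth aA B_ge' B_dec' cons_\<tau> Smat_nonneg Smat_le_1 g \<rho>
        by (rule observer_lyap_deriv_le[where m = m and V = V and A = A and L = L and B = B
              and S = "Smat E m (\<sigma> \<tau>)" and e = "\<lambda>i. e i \<tau>" and g = g])
      then show ?thesis unfolding W_def W'_def by simp
    qed
  qed (use t in simp)
  then show ?thesis unfolding W_def e_def V_def .
qed

lemma observer_error_decay:
  "\<exists>c>0. \<forall>\<sigma> x xs. switching_signal P \<sigma> \<and> solves_ode x (\<lambda>t. A *v x t) \<and>
      (\<forall>i<m. solves_ode (xs i) (observer_rhs A C (\<lambda>i k. F i (C i k)) s E m g \<sigma> x xs i))
    \<longrightarrow> (\<forall>t\<ge>0. err_norm m x xs t \<le> c * exp (- lam * t) * err_norm m x xs 0)"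
proof -
  define \<rho> where "\<rho> = (aA\<^sup>2 / 2 + (real m)\<^sup>2 * g\<^sup>2 / 2) / \<alpha> + 1"
  have \<rho>: "\<rho> > 0" "\<rho> * \<alpha> \<ge> aA\<^sup>2 / 2 + (real m)\<^sup>2 * g\<^sup>2 / 2"
  proof -
    have "aA\<^sup>2 / 2 + (real m)\<^sup>2 * g\<^sup>2 / 2 \<ge> 0" by simp
    then show "\<rho> > 0" unfolding \<rho>_def using \<alpha> by (intro add_nonneg_pos divide_nonneg_pos) auto
    show "\<rho> * \<alpha> \<ge> aA\<^sup>2 / 2 + (real m)\<^sup>2 * g\<^sup>2 / 2" unfolding \<rho>_def using \<alpha> by (simp add: field_simps)
  qed
  have "\<exists>lo hi. lo > 0 \<and> hi > 0 \<and>
      (\<forall>e. lo * (\<Sum>i<m. (norm (e i))\<^sup>2) \<le> observer_lyap m (unobs A C s) B \<rho> e) \<and>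
      (\<forall>e. observer_lyap m (unobs A C s) B \<rho> e \<le> hi * (\<Sum>i<m. (norm (e i))\<^sup>2))"
    by (rule observer_lyap_bounds) (use subspace_unobs bil B_ge \<alpha> \<rho> in auto)
  then obtain lo hi where lo: "lo > 0" and hi: "hi > 0"
    and lo_le: "\<forall>e. lo * (\<Sum>i<m. (norm (e i))\<^sup>2) \<le> observer_lyap m (unobs A C s) B \<rho> e"
    and le_hi: "\<forall>e. observer_lyap m (unobs A C s) B \<rho> e \<le> hi * (\<Sum>i<m. (norm (e i))\<^sup>2)"
    by blast
  show ?thesis
  proof (intro exI[of _ "sqrt (hi / lo)"] conjI allI impI)
    show "sqrt (hi / lo) > 0" using lo hi by simp
    fix \<sigma> x xs and t :: real
    assume "switching_signal P \<sigma> \<and> solves_ode x (\<lambda>t. A *v x t) \<and>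
      (\<forall>i<m. solves_ode (xs i) (observer_rhs A C (\<lambda>i k. F i (C i k)) s E m g \<sigma> x xs i))"
      and t: "t \<ge> 0"
    then have decay: "observer_lyap m (unobs A C s) B \<rho> (\<lambda>i. xs i t - x t)
        \<le> exp (- (2 * lam) * t) * observer_lyap m (unobs A C s) B \<rho> (\<lambda>i. xs i 0 - x 0)"
      using \<rho> by (intro observer_lyap_decay) auto
    have "lo * (err_norm m x xs t)\<^sup>2 \<le> observer_lyap m (unobs A C s) B \<rho> (\<lambda>i. xs i t - x t)"
      using lo_le unfolding err_norm_def by (simp add: sum_nonneg)
    also note decay
    also have "exp (- (2 * lam) * t) * observer_lyap m (unobs A C s) B \<rho> (\<lambda>i. xs i 0 - x 0)
        \<le> exp (- (2 * lam) * t) * (hi * (err_norm m x xs 0)\<^sup>2)"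
      using le_hi unfolding err_norm_def by (simp add: sum_nonneg)
    also have "exp (- (2 * lam) * t) = (exp (- lam * t))\<^sup>2"
      by (simp add: power2_eq_square flip: exp_add)
    finally have "lo * (err_norm m x xs t)\<^sup>2 \<le> (exp (- lam * t))\<^sup>2 * (hi * (err_norm m x xs 0)\<^sup>2)" .
    moreover have "err_norm m x xs 0 \<ge> 0" unfolding err_norm_def by (simp add: sum_nonneg)
    ultimately show "err_norm m x xs t \<le> sqrt (hi / lo) * exp (- lam * t) * err_norm m x xs 0"
      using le_sqrt_mult_of_sq_le[OF lo less_imp_le[OF hi]] by simp
  qed
qed

end

theorem theorem2:
  fixes A :: "real^'n^'n" and C :: "nat \<Rightarrow> nat \<Rightarrow> real^'n" and s :: "nat \<Rightarrow> nat"
    and m :: nat and P :: "'p set" and E :: "'p \<Rightarrow> nat \<Rightarrow> nat \<Rightarrow> bool" and lam :: real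
  assumes "m > 1"
    and "jointly_observable A C s m"
    and "finite P"
    and "\<forall>p\<in>P. is_graph_on E m p \<and> (\<forall>i<m. E p i i) \<and> strongly_connected E m p
               \<and> doubly_stochastic m (Smat E m p)"
    and "lam > 0"
  shows "\<exists>K :: nat \<Rightarrow> nat \<Rightarrow> real^'n. \<exists>g0>0. \<forall>g\<ge>g0. \<exists>c>0.
           \<forall>\<sigma> x xs. switching_signal P \<sigma> \<and>
              solves_ode x (\<lambda>t. A *v x t) \<and>
              (\<forall>i<m. solves_ode (xs i) (observer_rhs A C K s E m g \<sigma> x xs i))
            \<longrightarrow> (\<forall>t\<ge>0. err_norm m x xs t \<le> c * exp (- lam * t) * err_norm m x xs 0)"
proof -
  have m: "m > 0" using assms(1) by simp
  obtain F B \<alpha> where gains: "local_observers A C s m F B \<alpha> (lam + 1)"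
    using local_observers_exist by blast
  obtain aA where aA: "aA > 0" "\<And>y. norm (A *v y) \<le> aA * norm y"
    using linear_bounded_pos[OF matrix_vector_mul_linear[of A]] by blast
  have "\<forall>z. (\<forall>i<m. z \<in> unobs A C s i) \<longrightarrow> z = 0"
    using jointly_observable_unobs_inter[OF assms(2)] by blast
  then obtain \<beta> where \<beta>: "\<beta> > 0" and cons: "\<forall>p\<in>P. \<forall>w. (\<forall>i<m. w i \<in> unobs A C s i) \<longrightarrow>
      \<beta> * (\<Sum>i<m. (norm (w i))\<^sup>2) \<le> (\<Sum>i<m. (norm (w i))\<^sup>2) - (\<Sum>i<m. \<Sum>j<m. Smat E m p i j * (w i \<bullet> w j))"
    using consensus_form_lower_bound[OF m assms(3), of E "unobs A C s"] assms(4) subspace_unobs by blast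
  show ?thesis
  proof (rule exI[of _ "\<lambda>i k. F i (C i k)"], rule exI[of _ "(aA + 1 + lam) / \<beta>"], intro conjI allI impI)
    show g0: "(aA + 1 + lam) / \<beta> > 0" using aA \<beta> assms(5) by simp
    fix g assume g: "g \<ge> (aA + 1 + lam) / \<beta>"
    have "g \<ge> 0" using g g0 by linarith
    moreover have "g * \<beta> \<ge> aA + 1 + lam" using g \<beta> by (simp add: pos_divide_le_eq)
    moreover have "\<forall>p\<in>P. \<forall>i<m. E p i i" using assms(4) by blast
    ultimately have "distributed_observer A C s m F B \<alpha> lam P E \<beta> aA g"
      using gains m cons aA by (intro distributed_observer.intro distributed_observer_axioms.intro) auto
    then interpret distributed_observer A C s m F B \<alpha> lam P E \<beta> aA g .
    show "\<exists>c>0. \<forall>\<sigma> x xs. switching_signal P \<sigma> \<and> solves_ode x (\<lambda>t. A *v x t) \<and>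
        (\<forall>i<m. solves_ode (xs i) (observer_rhs A C (\<lambda>i k. F i (C i k)) s E m g \<sigma> x xs i))
      \<longrightarrow> (\<forall>t\<ge>0. err_norm m x xs t \<le> c * exp (- lam * t) * err_norm m x xs 0)"
      by (rule observer_error_decay)
  qed
qed

end
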